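(* There exist positive integers $g$ and $r_0$ (with $r_0$ even) and a family of DAGs $G$ with $n\to\infty$ nodes such that $\mathrm{OPT}_{I/O}^{(1)}=\Theta(n)$, while $\mathrm{OPT}_{I/O}^{(2)}=0$; here $\mathrm{OPT}_{I/O}^{(1)}$ is computed with $1$ processor and fast memory $r_0$, and $\mathrm{OPT}_{I/O}^{(2)}$ is computed with $2$ processors and fast memory $r_0/2$ each (and the same also holds with $2$ processors and fast memory $r_0$ each).
   Context: Multiprocessor red-blue pebbling (MPP). Input: a DAG $G=(V,E)$ with $n=|V|$ and positive integers $k$ (number of processors), $r$ (fast-memory size per processor), $g$ (cost of an I/O step). $\Delta_{in}$ denotes the maximum in-degree of $G$; sources/sinks are nodes of in-degree/out-degree $0$. A configuration is a tuple $(R^1,\dots,R^k,B)$ of subsets of $V$ ($R^j$ = nodes carrying a red pebble of processor $j$, $B$ = nodes carrying a blue pebble); it is valid if $|R^j|\le r$ for all $j$. The initial configuration has all sets empty; a configuration is terminal if every sink lies in $B\cup\bigcup_j R^j$. The transition rules are: (R1) for some $m\le k$, pairwise distinct processors $j_1,\dots,j_m$ and nodes $v_1,\dots,v_m$ with $v_i\in R^{j_i}$, add each $v_i$ to $B$ (cost $g$); (R2) for some $m\le k$, pairwise distinct processors $j_1,\dots,j_m$ and nodes $v_1,\dots,v_m\in B$, add each $v_i$ to $R^{j_i}$ (cost $g$); (R3) for some $m\le k$, pairwise distinct processors $j_1,\dots,j_m$ and nodes $v_1,\dots,v_m$ such that every in-neighbor of $v_i$ lies in $R^{j_i}$, add each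 $v_i$ to $R^{j_i}$ (cost $1$); (R4) remove a single red or blue pebble (cost $0$). A pebbling strategy is a sequence of valid configurations starting at the initial configuration and ending at a terminal one, each obtained from its predecessor by one rule; its cost is the sum of the costs of the rules applied. $\mathrm{OPT}$ denotes the minimum cost of a pebbling strategy. Applications of (R1),(R2) are called I/O steps and applications of (R3) compute steps. $\mathrm{OPT}_{I/O}^{(k)}$ denotes the minimum, over all minimum-cost pebbling strategies with $k$ processors, of the number of I/O steps. *)

theory Defs
  imports Main "HOL-Library.Landau_Symbols"
begin

text \<open>Processors are numbered 0..<k.
A configuration is a pair (R, B) where R j is the set of nodes carrying a red
pebble of processor j and B is the set of nodes carrying a blue pebble.\<close>

definition is_dag :: "'a set \<Rightarrow> ('a \<times> 'a) set \<Rightarrow> bool" where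
  "is_dag V E \<longleftrightarrow> finite V \<and> E \<subseteq> V \<times> V \<and> acyclic E"

type_synonym 'a config = "(nat \<Rightarrow> 'a set) \<times> 'a set"

text \<open>A partial map sigma from processors to nodes
(with pairwise distinct processors by construction) describes the parallel
rules R1 (Save), R2 (Load), R3 (Compute). R4 is DelRed / DelBlue.\<close>

datatype 'a move =
    Save "nat \<Rightarrow> 'a option"
  | Load "nat \<Rightarrow> 'a option"
  | Compute "nat \<Rightarrow> 'a option"
  | DelRed nat 'a
  | DelBlue 'a

definition init_config :: "'a config" where
  "init_config = (\<lambda>_. {}, {})"

definition add_red :: "(nat \<Rightarrow> 'a option) \<Rightarrow> (nat \<Rightarrow> 'a set) \<Rightarrow> (nat \<Rightarrow> 'a set)" where
  "add_red \<sigma> R = (\<lambda>j. case \<sigma> j of None \<Rightarrow> R j | Some v \<Rightarrow> insert v (R j))"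

fun applicable :: "'a set \<Rightarrow> ('a \<times> 'a) set \<Rightarrow> nat \<Rightarrow> 'a config \<Rightarrow> 'a move \<Rightarrow> bool" where
  "applicable V E k (R, B) (Save \<sigma>) \<longleftrightarrow>
     dom \<sigma> \<noteq> {} \<and> dom \<sigma> \<subseteq> {..<k} \<and> (\<forall>j v. \<sigma> j = Some v \<longrightarrow> v \<in> R j)"
| "applicable V E k (R, B) (Load \<sigma>) \<longleftrightarrow>
     dom \<sigma> \<noteq> {} \<and> dom \<sigma> \<subseteq> {..<k} \<and> ran \<sigma> \<subseteq> B"
| "applicable V E k (R, B) (Compute \<sigma>) \<longleftrightarrow>
     dom \<sigma> \<noteq> {} \<and> dom \<sigma> \<subseteq> {..<k} \<and>
     (\<forall>j v. \<sigma> j = Some v \<longrightarrow> v \<in> V \<and> (\<forall>u. (u, v) \<in> E \<longrightarrow> u \<in> R j))"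
| "applicable V E k (R, B) (DelRed j v) \<longleftrightarrow> j < k \<and> v \<in> R j"
| "applicable V E k (R, B) (DelBlue v) \<longleftrightarrow> v \<in> B"

fun apply_move :: "'a config \<Rightarrow> 'a move \<Rightarrow> 'a config" where
  "apply_move (R, B) (Save \<sigma>) = (R, B \<union> ran \<sigma>)"
| "apply_move (R, B) (Load \<sigma>) = (add_red \<sigma> R, B)"
| "apply_move (R, B) (Compute \<sigma>) = (add_red \<sigma> R, B)"
| "apply_move (R, B) (DelRed j v) = (R(j := R j - {v}), B)"
| "apply_move (R, B) (DelBlue v) = (R, B - {v})"

fun move_cost :: "nat \<Rightarrow> 'a move \<Rightarrow> nat" where
  "move_cost g (Save _) = g"
| "move_cost g (Load _) = g"
| "move_cost g (Compute _) = 1"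
| "move_cost g (DelRed _ _) = 0"
| "move_cost g (DelBlue _) = 0"

fun is_io :: "'a move \<Rightarrow> bool" where
  "is_io (Save _) = True"
| "is_io (Load _) = True"
| "is_io _ = False"

definition valid_config :: "nat \<Rightarrow> nat \<Rightarrow> 'a config \<Rightarrow> bool" where
  "valid_config k r C \<longleftrightarrow> (\<forall>j<k. card (fst C j) \<le> r)"

definition terminal_config :: "'a set \<Rightarrow> ('a \<times> 'a) set \<Rightarrow> nat \<Rightarrow> 'a config \<Rightarrow> bool" where
  "terminal_config V E k C \<longleftrightarrow>
     (\<forall>v\<in>V. (\<forall>w. (v, w) \<notin> E) \<longrightarrow> v \<in> snd C \<union> (\<Union>j<k. fst C j))"

fun strategy_from :: "'a set \<Rightarrow> ('a \<times> 'a) set \<Rightarrow> nat \<Rightarrow> nat \<Rightarrow> 'a config \<Rightarrow> 'a move list \<Rightarrow> bool" where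
  "strategy_from V E k r C [] \<longleftrightarrow> terminal_config V E k C"
| "strategy_from V E k r C (m # ms) \<longleftrightarrow>
     applicable V E k C m \<and> valid_config k r (apply_move C m) \<and>
     strategy_from V E k r (apply_move C m) ms"

definition pebbling_strategy :: "'a set \<Rightarrow> ('a \<times> 'a) set \<Rightarrow> nat \<Rightarrow> nat \<Rightarrow> 'a move list \<Rightarrow> bool" where
  "pebbling_strategy V E k r ms \<longleftrightarrow> strategy_from V E k r init_config ms"

definition strategy_cost :: "nat \<Rightarrow> 'a move list \<Rightarrow> nat" where
  "strategy_cost g ms = (\<Sum>m\<leftarrow>ms. move_cost g m)"

definition num_io :: "'a move list \<Rightarrow> nat" where
  "num_io ms = length (filter is_io ms)"

definition pebblable :: "'a set \<Rightarrow> ('a \<times> 'a) set \<Rightarrow> nat \<Rightarrow> nat \<Rightarrow> bool" where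
  "pebblable V E k r \<longleftrightarrow> (\<exists>ms. pebbling_strategy V E k r ms)"

definition OPT :: "'a set \<Rightarrow> ('a \<times> 'a) set \<Rightarrow> nat \<Rightarrow> nat \<Rightarrow> nat \<Rightarrow> nat" where
  "OPT V E k r g = (LEAST c. \<exists>ms. pebbling_strategy V E k r ms \<and> strategy_cost g ms = c)"

definition OPT_IO :: "'a set \<Rightarrow> ('a \<times> 'a) set \<Rightarrow> nat \<Rightarrow> nat \<Rightarrow> nat \<Rightarrow> nat" where
  "OPT_IO V E k r g = (LEAST t. \<exists>ms. pebbling_strategy V E k r ms \<and>
       strategy_cost g ms = OPT V E k r g \<and> num_io ms = t)"

end

theory Submission
  imports Defs "HOL-Library.Countable"
begin

(*
  The DAG consists of a chain Chain 0 -> ... -> Chain (chain_len G - 1) and G gadgets. Gadget g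
  is a path Y g 0 -> ... -> Y g (path_len - 1), cut into n_seg segments of length seg_len,
  together with a chain W g 0 -> ... -> W g (n_seg - 1) in which W g i also needs the path node
  Y g (pin i) ending segment n_seg - i; so the W nodes consume the segment ends in reverse order.
  The W chains of consecutive gadgets are linked, and chain_len G is the number of compute steps
  needed to recompute, for every W node, the gadget path up to its segment end.

  Two processors: one walks along the chain while the other recomputes the gadget paths with
  three red pebbles. Both finish after chain_len G compute steps, which the chain forces on every
  strategy, so an optimal strategy needs no I/O at all.

  One processor with n_seg - 1 red pebbles: when W g 0 is computed the last path node is red, so
  one of the other n_seg - 1 segments carries no red pebble. The W node needing the end of that
  segment is computed later, so unless some node of the gadget is loaded, the whole segment is
  computed twice. Storing and reloading the segment ends costs 2 (n_seg - 1) I/O steps per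
  gadget, and seg_len = 4 (n_seg - 1) makes recomputing a segment more expensive than that, so
  optimal strategies perform between G / 2 and O(n) I/O steps.
*)

section \<open>Executions of a strategy\<close>

definition run_config :: "'a move list \<Rightarrow> nat \<Rightarrow> 'a config" where
  "run_config ms t = foldl apply_move init_config (take t ms)"

lemma run_config_0 [simp]: "run_config ms 0 = init_config"
  by (simp add: run_config_def)

lemma run_config_Suc:
  "t < length ms \<Longrightarrow> run_config ms (Suc t) = apply_move (run_config ms t) (ms ! t)"
  by (simp add: run_config_def take_Suc_conv_app_nth)

lemma strategy_from_iff:
  "strategy_from V E k r C ms \<longleftrightarrow>
    (\<forall>t<length ms. applicable V E k (foldl apply_move C (take t ms)) (ms ! t) \<and>
        valid_config k r (foldl apply_move C (take (Suc t) ms))) \<and>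
    terminal_config V E k (foldl apply_move C ms)"
  by (induction ms arbitrary: C) (simp_all add: All_less_Suc2)

fun is_compute :: "'a move \<Rightarrow> bool" where
  "is_compute (Compute _) = True"
| "is_compute _ = False"

definition num_compute :: "'a move list \<Rightarrow> nat" where
  "num_compute ms = length (filter is_compute ms)"

lemma strategy_cost_eq: "strategy_cost g ms = num_compute ms + g * num_io ms"
  by (induction ms) (auto simp: strategy_cost_def num_compute_def num_io_def elim: is_io.elims)

lemma num_compute_append [simp]: "num_compute (ms @ ms') = num_compute ms + num_compute ms'"
  and num_io_append [simp]: "num_io (ms @ ms') = num_io ms + num_io ms'"
  by (simp_all add: num_compute_def num_io_def)

lemma num_compute_Cons [simp]: "num_compute (m # ms) = (if is_compute m then 1 else 0) + num_compute ms"
  and num_io_Cons [simp]: "num_io (m # ms) = (if is_io m then 1 else 0) + num_io ms"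
  and num_compute_Nil [simp]: "num_compute [] = 0"
  and num_io_Nil [simp]: "num_io [] = 0"
  by (simp_all add: num_compute_def num_io_def)

lemma num_compute_map_concat:
    "num_compute (map f (concat xss)) = (\<Sum>xs\<leftarrow>xss. num_compute (map f xs))"
  and num_io_map_concat: "num_io (map f (concat xss)) = (\<Sum>xs\<leftarrow>xss. num_io (map f xs))"
  by (induction xss) simp_all

lemma delete_counts [simp]: "num_compute (map (DelRed j) ds) = 0" "num_io (map (DelRed j) ds) = 0"
  by (induction ds) simp_all

definition pebbled :: "'a config \<Rightarrow> 'a set" where
  "pebbled C = snd C \<union> (\<Union>j. fst C j)"

lemma add_red_cases: "v \<in> add_red \<sigma> R j \<Longrightarrow> v \<in> R j \<or> \<sigma> j = Some v"
  by (auto simp: add_red_def split: option.splits)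

lemma pebbled_apply_move:
  assumes "applicable V E k C m" "v \<in> pebbled (apply_move C m)"
  shows "v \<in> pebbled C \<or>
    (\<exists>\<sigma> j. m = Compute \<sigma> \<and> \<sigma> j = Some v \<and> (\<forall>u. (u, v) \<in> E \<longrightarrow> u \<in> fst C j))"
proof -
  obtain R B where C: "C = (R, B)" by fastforce
  show ?thesis
    using assms unfolding C
    by (cases m) (auto simp: pebbled_def ran_def split: if_splits dest!: add_red_cases)
qed

lemma num_compute_take_Suc:
  "t < length ms \<Longrightarrow>
    num_compute (take (Suc t) ms) = num_compute (take t ms) + (if is_compute (ms ! t) then 1 else 0)"
  by (simp add: num_compute_def take_Suc_conv_app_nth)

definition computes :: "'a move list \<Rightarrow> nat \<Rightarrow> nat \<Rightarrow> 'a \<Rightarrow> bool" where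
  "computes ms t j v \<longleftrightarrow> t < length ms \<and> (\<exists>\<sigma>. ms ! t = Compute \<sigma> \<and> \<sigma> j = Some v)"

definition loads :: "'a move list \<Rightarrow> nat \<Rightarrow> nat \<Rightarrow> 'a \<Rightarrow> bool" where
  "loads ms t j v \<longleftrightarrow> t < length ms \<and> (\<exists>\<sigma>. ms ! t = Load \<sigma> \<and> \<sigma> j = Some v)"

lemma new_red_cases:
  "v \<in> fst (apply_move C m) j \<Longrightarrow> v \<notin> fst C j \<Longrightarrow>
    \<exists>\<sigma>. (m = Compute \<sigma> \<or> m = Load \<sigma>) \<and> \<sigma> j = Some v"
  by (cases C; cases m) (auto split: if_splits dest: add_red_cases)

lemma computes_red: "computes ms u j v \<Longrightarrow> v \<in> fst (run_config ms (Suc u)) j"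
  by (cases "run_config ms u") (auto simp: computes_def run_config_Suc add_red_def)

lemma red_origin:
  assumes "t \<le> t'" "t' \<le> length ms"
    and "v \<notin> fst (run_config ms t) j" "v \<in> fst (run_config ms t') j"
  shows "\<exists>u. t \<le> u \<and> u < t' \<and> (computes ms u j v \<or> loads ms u j v)"
  using assms
proof (induction t')
  case (Suc t')
  show ?case
  proof (cases "v \<in> fst (run_config ms t') j")
    case True
    then show ?thesis using Suc by (metis Suc_leD le_SucE less_SucI)
  next
    case False
    then have "t \<le> t'" using Suc.prems by (metis le_SucE)
    with False Suc.prems new_red_cases[of v "run_config ms t'" "ms ! t'" j] show ?thesis
      by (auto simp: run_config_Suc computes_def loads_def)
  qed
qed simp

lemma finite_red: "finite (fst (run_config ms t) j)"
proof (induction t)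
  case (Suc t)
  show ?case
  proof (cases "t < length ms")
    case True
    then show ?thesis using Suc
      by (cases "run_config ms t"; cases "ms ! t")
        (auto simp: run_config_Suc add_red_def split: option.splits)
  qed (use Suc.IH in \<open>simp add: run_config_def\<close>)
qed (simp add: init_config_def)

lemma finite_computes: "finite {u. computes ms u j v}"
  by (rule finite_subset[of _ "{..<length ms}"]) (auto simp: computes_def)

lemma card_computes_ge_2:
  "computes ms u j v \<Longrightarrow> computes ms u' j v \<Longrightarrow> u \<noteq> u' \<Longrightarrow> 2 \<le> card {u. computes ms u j v}"
proof -
  assume "computes ms u j v" "computes ms u' j v" "u \<noteq> u'"
  then show ?thesis using card_mono[OF finite_computes, of "{u, u'}"] by fastforce
qed

lemma sum_card_computes_le:
  assumes "finite V"
  shows "(\<Sum>v\<in>V. card {u. computes ms u j v}) \<le> num_compute ms"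
proof -
  have "(\<Sum>v\<in>V. card {u. computes ms u j v}) = card (\<Union>v\<in>V. {u. computes ms u j v})"
    by (rule card_UN_disjoint[symmetric]) (auto simp: assms finite_computes computes_def)
  also have "\<dots> \<le> card {t. t < length ms \<and> is_compute (ms ! t)}"
    by (rule card_mono) (auto simp: computes_def)
  finally show ?thesis by (simp add: num_compute_def length_filter_conv_card)
qed

lemma card_load_times_le: "card {u. \<exists>v. loads ms u j v} \<le> num_io ms"
proof -
  have "card {u. \<exists>v. loads ms u j v} \<le> card {t. t < length ms \<and> is_io (ms ! t)}"
    by (rule card_mono) (auto simp: loads_def)
  then show ?thesis by (simp add: num_io_def length_filter_conv_card)
qed

context
  fixes V E k r ms
  assumes strategy: "pebbling_strategy V E k r ms"
begin

lemma strategy_applicable: "t < length ms \<Longrightarrow> applicable V E k (run_config ms t) (ms ! t)"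
  and strategy_valid: "t < length ms \<Longrightarrow> valid_config k r (run_config ms (Suc t))"
  and strategy_terminal: "terminal_config V E k (run_config ms (length ms))"
  using strategy by (auto simp: pebbling_strategy_def strategy_from_iff run_config_def)

lemma path_pebbled_num_compute:
  assumes path: "\<And>i. i < d \<Longrightarrow> (c i, c (Suc i)) \<in> E"
  shows "t \<le> length ms \<Longrightarrow> i \<le> d \<Longrightarrow> c i \<in> pebbled (run_config ms t) \<Longrightarrow>
    Suc i \<le> num_compute (take t ms)"
proof (induction t arbitrary: i)
  case 0
  then show ?case by (simp add: pebbled_def init_config_def)
next
  case (Suc t)
  then have t: "t < length ms" by simp
  have "c i \<in> pebbled (run_config ms t) \<or>
    (\<exists>\<sigma> j. ms ! t = Compute \<sigma> \<and> \<sigma> j = Some (c i) \<and>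
      (\<forall>u. (u, c i) \<in> E \<longrightarrow> u \<in> fst (run_config ms t) j))"
    using pebbled_apply_move[OF strategy_applicable[OF t], of "c i"] Suc.prems
    by (simp add: run_config_Suc[OF t])
  then show ?case
  proof (elim disjE exE conjE)
    assume "c i \<in> pebbled (run_config ms t)"
    then show ?thesis using Suc.IH[of i] Suc.prems num_compute_take_Suc[OF t] by simp
  next
    fix \<sigma> j
    assume compute: "ms ! t = Compute \<sigma>"
      and parents: "\<forall>u. (u, c i) \<in> E \<longrightarrow> u \<in> fst (run_config ms t) j"
    show ?thesis
    proof (cases i)
      case (Suc i')
      then have "c i' \<in> pebbled (run_config ms t)"
        using parents path[of i'] Suc.prems by (auto simp: pebbled_def)
      then show ?thesis using Suc.IH[of i'] Suc.prems num_compute_take_Suc[OF t] compute \<open>i = Suc i'\<close>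
        by simp
    qed (simp add: num_compute_take_Suc[OF t] compute)
  qed
qed

lemma strategy_cost_ge_path:
  assumes path: "\<And>i. i < d \<Longrightarrow> (c i, c (Suc i)) \<in> E"
    and sink: "c d \<in> V" "\<And>w. (c d, w) \<notin> E"
  shows "Suc d \<le> strategy_cost g ms"
proof -
  have "c d \<in> pebbled (run_config ms (length ms))"
    using strategy_terminal sink unfolding terminal_config_def pebbled_def by blast
  then have "Suc d \<le> num_compute ms"
    using path_pebbled_num_compute[where c = c and d = d, OF path, of "length ms" d] by simp
  then show ?thesis by (simp add: strategy_cost_eq)
qed

lemma pebbled_computed:
  "t \<le> length ms \<Longrightarrow> v \<in> pebbled (run_config ms t) \<Longrightarrow> \<exists>u<t. \<exists>j. computes ms u j v"
proof (induction t)
  case 0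
  then show ?case by (simp add: pebbled_def init_config_def)
next
  case (Suc t)
  then have t: "t < length ms" by simp
  from pebbled_apply_move[OF strategy_applicable[OF t], of v] Suc.prems run_config_Suc[OF t]
  show ?case
    using Suc.IH t by (auto simp: computes_def less_Suc_eq)
qed

lemma computes_parent_red:
  "computes ms u j v \<Longrightarrow> (w, v) \<in> E \<Longrightarrow> w \<in> fst (run_config ms u) j"
  using strategy_applicable unfolding computes_def
  by (cases "run_config ms u") force

lemma computes_processor: "computes ms u j v \<Longrightarrow> j < k"
  using strategy_applicable unfolding computes_def
  by (cases "run_config ms u") (force simp: dom_def)

lemma computes_parent_computed_before:
  "computes ms u j v \<Longrightarrow> (w, v) \<in> E \<Longrightarrow> \<exists>u'<u. \<exists>j'. computes ms u' j' w"
  using pebbled_computed[of u w] computes_parent_red[of u j v w]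
  by (auto simp: computes_def pebbled_def)

lemma dag_node_computed:
  assumes dag: "is_dag V E" and v: "v \<in> V"
  shows "\<exists>u j. computes ms u j v"
proof -
  have "wf (E\<inverse>)"
    using dag by (intro finite_acyclic_wf_converse)
      (auto simp: is_dag_def intro: finite_subset[of E "V \<times> V"])
  then show ?thesis
    using v
  proof (induction v rule: wf_induct_rule)
    case (less v)
    show ?case
    proof (cases "\<exists>w. (v, w) \<in> E")
      case True
      then obtain w where w: "(v, w) \<in> E" by blast
      then have "w \<in> V" using dag by (auto simp: is_dag_def)
      then obtain u j where "computes ms u j w" using less.IH w by blast
      then show ?thesis using computes_parent_computed_before w by blast
    next
      case False
      then have "v \<in> pebbled (run_config ms (length ms))"
        using strategy_terminal less.prems unfolding terminal_config_def pebbled_def by blast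
      then show ?thesis using pebbled_computed by blast
    qed
  qed
qed

lemma red_valid: "t < length ms \<Longrightarrow> j < k \<Longrightarrow> card (fst (run_config ms (Suc t)) j) \<le> r"
  using strategy_valid by (simp add: valid_config_def)

lemma path_computed_after_source:
  assumes path: "\<And>i. i < n \<Longrightarrow> (c i, c (Suc i)) \<in> E"
  shows "i \<le> n \<Longrightarrow> computes ms u j (c i) \<Longrightarrow> \<exists>u'\<le>u. \<exists>j'. computes ms u' j' (c 0)"
proof (induction i arbitrary: u j)
  case (Suc i)
  then obtain u' j' where "u' < u" "computes ms u' j' (c i)"
    using computes_parent_computed_before[OF Suc.prems(2) path[of i]] by auto
  moreover obtain u'' j'' where "u'' \<le> u'" "computes ms u'' j'' (c 0)"
    using Suc.IH[OF _ \<open>computes ms u' j' (c i)\<close>] Suc.prems(1) by auto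
  ultimately show ?case by (intro exI[of _ u'']) auto
qed blast

lemma path_recomputed:
  assumes path: "\<And>p. p < M \<Longrightarrow> (y p, y (Suc p)) \<in> E"
    and no_load: "\<And>u p. p \<le> M \<Longrightarrow> \<not> loads ms u j (y p)"
  shows "q \<le> M \<Longrightarrow> y q \<in> fst (run_config ms t') j \<Longrightarrow> t \<le> t' \<Longrightarrow> t' \<le> length ms \<Longrightarrow>
    (\<forall>p. a \<le> p \<and> p \<le> q \<longrightarrow> y p \<notin> fst (run_config ms t) j) \<Longrightarrow>
    a \<le> p \<Longrightarrow> p \<le> q \<Longrightarrow> \<exists>u. t \<le> u \<and> u < t' \<and> computes ms u j (y p)"
proof (induction q arbitrary: t' p)
  case 0
  then show ?case using red_origin[of t t' ms "y 0" j] no_load by auto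
next
  case (Suc q)
  have "y (Suc q) \<notin> fst (run_config ms t) j"
    using Suc.prems(5-7) by simp
  then obtain u where u: "t \<le> u" "u < t'" "computes ms u j (y (Suc q))"
    using red_origin[of t t' ms "y (Suc q)" j] no_load[OF Suc.prems(1)] Suc.prems(2-4) by blast
  show ?case
  proof (cases "p = Suc q")
    case False
    have "y q \<in> fst (run_config ms u) j"
      using computes_parent_red[OF u(3) path[of q]] Suc.prems(1) by simp
    moreover have "u \<le> length ms" using u Suc.prems(4) by simp
    ultimately obtain u' where "t \<le> u'" "u' < u" "computes ms u' j (y p)"
      using Suc.IH[of u p] Suc.prems u(1) False by fastforce
    then show ?thesis using u(2) by auto
  qed (use u in auto)
qed

end

section \<open>Relabelling the nodes\<close>

definition map_config :: "('a \<Rightarrow> 'b) \<Rightarrow> 'a config \<Rightarrow> 'b config" where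
  "map_config f C = (\<lambda>j. f ` fst C j, f ` snd C)"

definition config_within :: "'a set \<Rightarrow> 'a config \<Rightarrow> bool" where
  "config_within V C \<longleftrightarrow> (\<forall>j. fst C j \<subseteq> V) \<and> snd C \<subseteq> V"

lemma config_within_apply_move:
  "applicable V E k C m \<Longrightarrow> config_within V C \<Longrightarrow> config_within V (apply_move C m)"
  by (cases C; cases m) (force simp: config_within_def ran_def add_red_def split: option.splits)+

lemma add_red_map: "add_red (\<lambda>j. map_option f (\<sigma> j)) (\<lambda>j. f ` R j) j = f ` add_red \<sigma> R j"
  by (simp add: add_red_def split: option.splits)

context
  fixes f :: "'a \<Rightarrow> 'b" and V :: "'a set" and E
  assumes inj: "inj_on f V" and edges: "E \<subseteq> V \<times> V"
begin

lemma applicable_map: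
  assumes within: "config_within V C" and app: "applicable V E k C m"
  shows "applicable (f ` V) (map_prod f f ` E) k (map_config f C) (map_move f m)"
proof -
  obtain R B where C: "C = (R, B)" by fastforce
  show ?thesis
  proof (cases m)
    case (Compute \<sigma>)
    have "\<forall>j w. (map_option f \<circ> \<sigma>) j = Some w \<longrightarrow>
      w \<in> f ` V \<and> (\<forall>u. (u, w) \<in> map_prod f f ` E \<longrightarrow> u \<in> f ` R j)"
    proof (intro allI impI)
      fix j w
      assume "(map_option f \<circ> \<sigma>) j = Some w"
      then obtain v where v: "\<sigma> j = Some v" "w = f v" by auto
      have "v \<in> V" using app v unfolding C Compute by simp
      moreover have "u \<in> f ` R j" if edge: "(u, w) \<in> map_prod f f ` E" for u
      proof -
        obtain a b where ab: "(a, b) \<in> E" "u = f a" "f b = f v" using edge v by fastforce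
        then have "b = v" using \<open>v \<in> V\<close> edges inj_onD[OF inj] by blast
        then show ?thesis using app v ab unfolding C Compute by simp
      qed
      ultimately show "w \<in> f ` V \<and> (\<forall>u. (u, w) \<in> map_prod f f ` E \<longrightarrow> u \<in> f ` R j)"
        using v by blast
    qed
    then show ?thesis using app unfolding C Compute by (simp add: map_config_def dom_def)
  qed (use app in \<open>auto simp: C map_config_def dom_def ran_def\<close>)
qed

lemma apply_move_map:
  assumes within: "config_within V C" and app: "applicable V E k C m"
  shows "apply_move (map_config f C) (map_move f m) = map_config f (apply_move C m)"
proof -
  obtain R B where C: "C = (R, B)" by fastforce
  have diff: "f ` (A - {v}) = f ` A - {f v}" if "A \<subseteq> V" "v \<in> A" for A v
    using that by (subst inj_on_image_set_diff[OF inj]) auto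
  show ?thesis
  proof (cases m)
    case (DelRed j v)
    then show ?thesis
      using within app diff[of "R j" v] by (auto simp: C map_config_def config_within_def fun_eq_iff)
  next
    case (DelBlue v)
    then show ?thesis
      using within app diff[of B v] by (auto simp: C map_config_def config_within_def)
  qed (auto simp: C map_config_def comp_def fun_eq_iff add_red_map ran_map_option image_Un)
qed

lemma valid_config_map:
  "config_within V C \<Longrightarrow> valid_config k r (map_config f C) \<longleftrightarrow> valid_config k r C"
  by (simp add: valid_config_def map_config_def config_within_def card_image inj_on_subset[OF inj])

lemma terminal_config_map:
  "terminal_config V E k C \<Longrightarrow> terminal_config (f ` V) (map_prod f f ` E) k (map_config f C)"
  unfolding terminal_config_def map_config_def by fastforce

lemma strategy_from_map:
  "config_within V C \<Longrightarrow> strategy_from V E k r C ms \<Longrightarrow>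
    strategy_from (f ` V) (map_prod f f ` E) k r (map_config f C) (map (map_move f) ms)"
proof (induction ms arbitrary: C)
  case (Cons m ms)
  then have app: "applicable V E k C m" and within: "config_within V (apply_move C m)"
    using config_within_apply_move[of V E k C m] by simp_all
  then show ?case
    using Cons by (simp add: applicable_map apply_move_map[OF Cons.prems(1) app] valid_config_map)
qed (simp add: terminal_config_map)

lemma pebbling_strategy_map:
  "pebbling_strategy V E k r ms \<Longrightarrow>
    pebbling_strategy (f ` V) (map_prod f f ` E) k r (map (map_move f) ms)"
  using strategy_from_map[of init_config]
  by (simp add: pebbling_strategy_def config_within_def init_config_def map_config_def)

end

lemma strategy_cost_map [simp]: "strategy_cost g (map (map_move f) ms) = strategy_cost g ms"
proof -
  have "move_cost g (map_move f m) = move_cost g m" for m by (cases m) simp_all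
  then show ?thesis by (simp add: strategy_cost_def comp_def)
qed

lemma num_io_map [simp]: "num_io (map (map_move f) ms) = num_io ms"
proof -
  have "is_io (map_move f m) = is_io m" for m by (cases m) simp_all
  then show ?thesis by (induction ms) (simp_all add: num_io_def)
qed

lemma OPT_le: "pebbling_strategy V E k r ms \<Longrightarrow> OPT V E k r g \<le> strategy_cost g ms"
  unfolding OPT_def by (rule Least_le, rule exI[of _ ms]) simp

lemma OPT_IO_attained:
  assumes "pebbling_strategy V E k r ms0"
  obtains ms where "pebbling_strategy V E k r ms" "strategy_cost g ms = OPT V E k r g"
    "num_io ms = OPT_IO V E k r g"
proof -
  have "\<exists>ms. pebbling_strategy V E k r ms \<and> strategy_cost g ms = OPT V E k r g"
    unfolding OPT_def by (rule LeastI, rule exI[of _ ms0]) (simp add: assms)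
  then obtain ms1 where ms1: "pebbling_strategy V E k r ms1" "strategy_cost g ms1 = OPT V E k r g"
    by blast
  have "\<exists>ms. pebbling_strategy V E k r ms \<and> strategy_cost g ms = OPT V E k r g \<and>
      num_io ms = OPT_IO V E k r g"
    unfolding OPT_IO_def by (rule LeastI_ex) (use ms1 in blast)
  with that show thesis by blast
qed

lemma OPT_IO_eq_0:
  assumes "pebbling_strategy V E k r ms0" "num_io ms0 = 0"
    and "\<And>ms. pebbling_strategy V E k r ms \<Longrightarrow> strategy_cost g ms0 \<le> strategy_cost g ms"
  shows "OPT_IO V E k r g = 0"
proof -
  obtain ms where ms: "pebbling_strategy V E k r ms" "strategy_cost g ms = OPT V E k r g"
    using OPT_IO_attained[OF assms(1)] by blast
  have "OPT V E k r g = strategy_cost g ms0"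
    using OPT_le[OF assms(1), of g] assms(3)[OF ms(1)] ms(2) by linarith
  then show ?thesis
    unfolding OPT_IO_def using assms(1,2) by (intro Least_eq_0 exI[of _ ms0]) simp
qed

definition pebbling_costs :: "'a set \<Rightarrow> ('a \<times> 'a) set \<Rightarrow> nat \<Rightarrow> nat \<Rightarrow> nat \<Rightarrow> (nat \<times> nat) set" where
  "pebbling_costs V E k r g =
    {(strategy_cost g ms, num_io ms) | ms. pebbling_strategy V E k r ms}"

lemma mem_pebbling_costs:
  "(c, t) \<in> pebbling_costs V E k r g \<longleftrightarrow>
    (\<exists>ms. pebbling_strategy V E k r ms \<and> strategy_cost g ms = c \<and> num_io ms = t)"
  by (auto simp: pebbling_costs_def)

lemma pebbling_costs_image:
  assumes inj: "inj_on f V" and edges: "E \<subseteq> V \<times> V"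
  shows "pebbling_costs (f ` V) (map_prod f f ` E) k r g = pebbling_costs V E k r g"
proof -
  let ?h = "the_inv_into V f"
  have "map_prod ?h ?h ` map_prod f f ` E = E"
    using edges by (force simp: image_image the_inv_into_f_f[OF inj])
  moreover have "map_prod f f ` E \<subseteq> f ` V \<times> f ` V" using edges by auto
  ultimately have from_image: "pebbling_strategy V E k r (map (map_move ?h) ms)"
    if "pebbling_strategy (f ` V) (map_prod f f ` E) k r ms" for ms
    using pebbling_strategy_map[OF inj_on_the_inv_into[OF inj], of "map_prod f f ` E" k r ms]
      that inj by simp
  show ?thesis
  proof (intro set_eqI iffI)
    fix x assume "x \<in> pebbling_costs (f ` V) (map_prod f f ` E) k r g"
    then obtain ms where "pebbling_strategy (f ` V) (map_prod f f ` E) k r ms"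
      "x = (strategy_cost g ms, num_io ms)" by (auto simp: pebbling_costs_def)
    then show "x \<in> pebbling_costs V E k r g"
      using from_image by (force simp: pebbling_costs_def)
  next
    fix x assume "x \<in> pebbling_costs V E k r g"
    then obtain ms where "pebbling_strategy V E k r ms" "x = (strategy_cost g ms, num_io ms)"
      by (auto simp: pebbling_costs_def)
    then show "x \<in> pebbling_costs (f ` V) (map_prod f f ` E) k r g"
      using pebbling_strategy_map[OF inj edges] by (force simp: pebbling_costs_def)
  qed
qed

lemma OPT_eq_pebbling_costs: "OPT V E k r g = (LEAST c. \<exists>t. (c, t) \<in> pebbling_costs V E k r g)"
  by (simp add: OPT_def mem_pebbling_costs)

lemma OPT_IO_eq_pebbling_costs:
  "OPT_IO V E k r g = (LEAST t. (OPT V E k r g, t) \<in> pebbling_costs V E k r g)"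
  by (simp add: OPT_IO_def mem_pebbling_costs)

lemma pebblable_eq_pebbling_costs: "pebblable V E k r \<longleftrightarrow> pebbling_costs V E k r g \<noteq> {}"
  by (simp add: pebblable_def pebbling_costs_def)

lemma
  assumes "inj_on f V" "E \<subseteq> V \<times> V"
  shows OPT_IO_image: "OPT_IO (f ` V) (map_prod f f ` E) k r g = OPT_IO V E k r g"
    and pebblable_image: "pebblable (f ` V) (map_prod f f ` E) k r \<longleftrightarrow> pebblable V E k r"
  using pebbling_costs_image[OF assms, of k r] pebbling_costs_image[OF assms, of k r 0]
  by (simp_all add: OPT_IO_eq_pebbling_costs OPT_eq_pebbling_costs pebblable_eq_pebbling_costs[of _ _ _ _ 0])

lemma is_dag_image:
  assumes dag: "is_dag V E" and inj: "inj_on f V"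
  shows "is_dag (f ` V) (map_prod f f ` E)"
proof -
  let ?h = "the_inv_into V f"
  have "(?h x, ?h y) \<in> E\<^sup>+" if "(x, y) \<in> (map_prod f f ` E)\<^sup>+" for x y
    using that
  proof (induction rule: trancl_induct)
    case (base y)
    then show ?case using dag by (auto simp: is_dag_def the_inv_into_f_f[OF inj])
  next
    case (step y z)
    then have "(?h y, ?h z) \<in> E" using dag by (auto simp: is_dag_def the_inv_into_f_f[OF inj])
    with step.IH show ?case by (rule trancl_into_trancl)
  qed
  then show ?thesis using dag by (auto simp: is_dag_def acyclic_def)
qed

section \<open>Strategies from programs\<close>

fun runs :: "'a set \<Rightarrow> ('a \<times> 'a) set \<Rightarrow> nat \<Rightarrow> nat \<Rightarrow> 'a config \<Rightarrow> 'a move list \<Rightarrow> 'a config \<Rightarrow> bool"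
where
  "runs V E k r C [] C' \<longleftrightarrow> C' = C"
| "runs V E k r C (m # ms) C' \<longleftrightarrow>
     applicable V E k C m \<and> valid_config k r (apply_move C m) \<and> runs V E k r (apply_move C m) ms C'"

lemma runs_append:
  "runs V E k r C ms C1 \<Longrightarrow> runs V E k r C1 ms' C2 \<Longrightarrow> runs V E k r C (ms @ ms') C2"
  by (induction ms arbitrary: C) auto

lemma pebbling_strategy_if_runs:
  "runs V E k r init_config ms C \<Longrightarrow> terminal_config V E k C \<Longrightarrow> pebbling_strategy V E k r ms"
proof -
  have "runs V E k r C0 ms C \<Longrightarrow> terminal_config V E k C \<Longrightarrow> strategy_from V E k r C0 ms" for C0
    by (induction ms arbitrary: C0) auto
  then show "runs V E k r init_config ms C \<Longrightarrow> terminal_config V E k C \<Longrightarrow> ?thesis"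
    by (simp add: pebbling_strategy_def)
qed

lemma runs_deletes:
  "j < k \<Longrightarrow> distinct ds \<Longrightarrow> set ds \<subseteq> R j \<Longrightarrow> valid_config k r (R, B) \<Longrightarrow>
    runs V E k r (R, B) (map (DelRed j) ds) (R(j := R j - set ds), B)"
proof (induction ds arbitrary: R)
  case (Cons d ds)
  let ?R = "R(j := R j - {d})"
  have valid: "valid_config k r (?R, B)"
    using Cons.prems(4) unfolding valid_config_def
    by (metis card_Diff1_le fst_conv fun_upd_apply le_trans)
  have "set ds \<subseteq> ?R j" using Cons.prems(2,3) by auto
  then have "runs V E k r (?R, B) (map (DelRed j) ds) (?R(j := ?R j - set ds), B)"
    using Cons.IH[OF Cons.prems(1) _ _ valid] Cons.prems(2) by (simp add: fun_upd_def)
  moreover have "?R(j := ?R j - set ds) = R(j := R j - set (d # ds))" by (auto simp: fun_eq_iff)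
  ultimately show ?case using Cons.prems valid by (simp add: fun_upd_def)
qed simp

datatype 'a seq_step = SCompute 'a | SSave 'a | SLoad 'a | SDrop 'a

fun seq_run :: "'a set \<Rightarrow> ('a \<times> 'a) set \<Rightarrow> nat \<Rightarrow> 'a set \<Rightarrow> 'a set \<Rightarrow> 'a seq_step list \<Rightarrow>
    'a set \<Rightarrow> 'a set \<Rightarrow> bool" where
  "seq_run V E r R B [] R' B' \<longleftrightarrow> R' = R \<and> B' = B"
| "seq_run V E r R B (SCompute a # s) R' B' \<longleftrightarrow>
     a \<in> V \<and> (\<forall>u. (u, a) \<in> E \<longrightarrow> u \<in> R) \<and> card (insert a R) \<le> r \<and>
     seq_run V E r (insert a R) B s R' B'"
| "seq_run V E r R B (SSave a # s) R' B' \<longleftrightarrow> a \<in> R \<and> seq_run V E r R (insert a B) s R' B'"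
| "seq_run V E r R B (SLoad a # s) R' B' \<longleftrightarrow>
     a \<in> B \<and> card (insert a R) \<le> r \<and> seq_run V E r (insert a R) B s R' B'"
| "seq_run V E r R B (SDrop a # s) R' B' \<longleftrightarrow> a \<in> R \<and> seq_run V E r (R - {a}) B s R' B'"

lemma seq_run_append:
  "seq_run V E r R B s R1 B1 \<Longrightarrow> seq_run V E r R1 B1 s' R2 B2 \<Longrightarrow> seq_run V E r R B (s @ s') R2 B2"
proof (induction s arbitrary: R B)
  case (Cons st s)
  then show ?case by (cases st) auto
qed simp

lemma seq_run_concat:
  "(\<And>i. a \<le> i \<Longrightarrow> i < b \<Longrightarrow> seq_run V E r (R i) (B i) (s i) (R (Suc i)) (B (Suc i))) \<Longrightarrow>
    a \<le> b \<Longrightarrow> seq_run V E r (R a) (B a) (concat (map s [a..<b])) (R b) (B b)"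
proof (induction b)
  case (Suc b)
  then show ?case by (cases "a = Suc b") (auto intro!: seq_run_append)
qed simp

fun seq_move :: "'a seq_step \<Rightarrow> 'a move" where
  "seq_move (SCompute a) = Compute [0 \<mapsto> a]"
| "seq_move (SSave a) = Save [0 \<mapsto> a]"
| "seq_move (SLoad a) = Load [0 \<mapsto> a]"
| "seq_move (SDrop a) = DelRed 0 a"

definition single_reds :: "'a set \<Rightarrow> nat \<Rightarrow> 'a set" where
  "single_reds R j = (if j = 0 then R else {})"

definition pair_reds :: "'a set \<Rightarrow> 'a set \<Rightarrow> nat \<Rightarrow> 'a set" where
  "pair_reds R0 R1 j = (if j = 0 then R0 else if j = 1 then R1 else {})"

lemma single_reds_simps [simp]:
  "single_reds R 0 = R"
  "(single_reds R)(0 := R') = single_reds R'"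
  "add_red [0 \<mapsto> a] (single_reds R) = single_reds (insert a R)"
  "single_reds {} = (\<lambda>_. {})"
  by (auto simp: single_reds_def add_red_def fun_eq_iff)

lemma pair_reds_simps [simp]:
  "pair_reds R0 R1 0 = R0" "pair_reds R0 R1 1 = R1" "pair_reds R0 R1 (Suc 0) = R1"
  "(pair_reds R0 R1)(0 := R0') = pair_reds R0' R1" "(pair_reds R0 R1)(Suc 0 := R1') = pair_reds R0 R1'"
  "add_red [0 \<mapsto> a, Suc 0 \<mapsto> b] (pair_reds R0 R1) = pair_reds (insert a R0) (insert b R1)"
  "pair_reds {} {} = (\<lambda>_. {})"
  by (auto simp: pair_reds_def add_red_def fun_eq_iff)

lemma UN_pair_reds: "(\<Union>j<2. pair_reds R0 R1 j) = R0 \<union> R1"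
  by (auto simp: pair_reds_def less_2_cases_iff)

lemma runs_seq_run:
  "seq_run V E r R B s R' B' \<Longrightarrow> card R \<le> r \<Longrightarrow>
    runs V E 1 r (single_reds R, B) (map seq_move s) (single_reds R', B')"
proof (induction s arbitrary: R B)
  case (Cons st s)
  then show ?case
    by (cases st) (auto simp: valid_config_def intro: le_trans[OF card_Diff1_le])
qed simp

fun block_run :: "'a set \<Rightarrow> ('a \<times> 'a) set \<Rightarrow> nat \<Rightarrow> 'a set \<Rightarrow> ('a \<times> 'a list) list \<Rightarrow> 'a set \<Rightarrow> bool"
where
  "block_run V E r R [] R' \<longleftrightarrow> R' = R"
| "block_run V E r R ((a, ds) # p) R' \<longleftrightarrow>
     a \<in> V \<and> (\<forall>u. (u, a) \<in> E \<longrightarrow> u \<in> R) \<and> card (insert a R) \<le> r \<and>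
     distinct ds \<and> set ds \<subseteq> insert a R \<and> block_run V E r (insert a R - set ds) p R'"

lemma block_run_append:
  "block_run V E r R p R1 \<Longrightarrow> block_run V E r R1 q R2 \<Longrightarrow> block_run V E r R (p @ q) R2"
  by (induction p arbitrary: R) auto

lemma block_run_concat:
  "(\<And>i. a \<le> i \<Longrightarrow> i < b \<Longrightarrow> block_run V E r (R i) (p i) (R (Suc i))) \<Longrightarrow>
    a \<le> b \<Longrightarrow> block_run V E r (R a) (concat (map p [a..<b])) (R b)"
proof (induction b)
  case (Suc b)
  then show ?case by (cases "a = Suc b") (auto intro!: block_run_append)
qed simp

definition block_steps :: "'a \<times> 'a list \<Rightarrow> 'a seq_step list" where
  "block_steps b = SCompute (fst b) # map SDrop (snd b)"

lemma seq_run_drops: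
  "distinct ds \<Longrightarrow> set ds \<subseteq> R \<Longrightarrow> seq_run V E r R B (map SDrop ds) (R - set ds) B"
proof (induction ds arbitrary: R)
  case (Cons d ds)
  then show ?case using Cons.IH[of "R - {d}"] by (auto simp: Diff_insert2[symmetric])
qed simp

lemma seq_run_blocks:
  "block_run V E r R p R' \<Longrightarrow> seq_run V E r R B (concat (map block_steps p)) R' B"
proof (induction p arbitrary: R)
  case (Cons b p)
  obtain a ds where b: "b = (a, ds)" by fastforce
  have "seq_run V E r R B (block_steps b) (insert a R - set ds) B"
    using Cons.prems seq_run_drops[of ds "insert a R"] by (simp add: b block_steps_def)
  then show ?case using Cons b seq_run_append by fastforce
qed simp

lemma block_steps_counts [simp]:
  "num_compute (map seq_move (block_steps b)) = 1" "num_io (map seq_move (block_steps b)) = 0"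
  by (simp_all add: block_steps_def comp_def)

lemmas seq_counts_simps = num_compute_map_concat num_io_map_concat comp_def sum_list_triv

definition zip_blocks :: "('a \<times> 'a list) list \<Rightarrow> ('a \<times> 'a list) list \<Rightarrow> 'a move list" where
  "zip_blocks p q = concat (map (\<lambda>((a, ds), (b, es)).
     Compute [0 \<mapsto> a, 1 \<mapsto> b] # map (DelRed 0) ds @ map (DelRed 1) es) (zip p q))"

lemma runs_zip_blocks:
  "length p = length q \<Longrightarrow> block_run V E r R0 p R0' \<Longrightarrow> block_run V E r R1 q R1' \<Longrightarrow>
    finite R0 \<Longrightarrow> finite R1 \<Longrightarrow>
    runs V E 2 r (pair_reds R0 R1, B) (zip_blocks p q) (pair_reds R0' R1', B)"
proof (induction p q arbitrary: R0 R1 rule: list_induct2)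
  case Nil
  then show ?case by (simp add: zip_blocks_def)
next
  case (Cons x p y q)
  obtain a ds b es where xy: "x = (a, ds)" "y = (b, es)" by fastforce
  let ?C = "\<lambda>Q0 Q1. (pair_reds Q0 Q1, B)"
  have valid: "valid_config 2 r (?C (insert a R0) (insert b R1))"
    using Cons.prems xy by (auto simp: valid_config_def less_2_cases_iff)
  have compute: "runs V E 2 r (?C R0 R1) [Compute [0 \<mapsto> a, 1 \<mapsto> b]] (?C (insert a R0) (insert b R1))"
    using Cons.prems xy valid by (auto simp: dom_def)
  have delete0: "runs V E 2 r (?C (insert a R0) (insert b R1)) (map (DelRed 0) ds)
      (?C (insert a R0 - set ds) (insert b R1))"
    using runs_deletes[OF _ _ _ valid, of 0 ds] Cons.prems xy by simp
  have delete1: "runs V E 2 r (?C (insert a R0 - set ds) (insert b R1)) (map (DelRed 1) es)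
      (?C (insert a R0 - set ds) (insert b R1 - set es))"
  proof -
    let ?R = "pair_reds (insert a R0 - set ds) (insert b R1)"
    have "valid_config 2 r (?R, B)"
      using valid Cons.prems(3) by (auto simp: valid_config_def less_2_cases_iff intro: le_trans[OF card_mono])
    then have "runs V E 2 r (?R, B) (map (DelRed 1) es) (?R(1 := ?R 1 - set es), B)"
      by (rule runs_deletes[rotated 3]) (use Cons.prems xy in auto)
    then show ?thesis by simp
  qed
  have rest: "runs V E 2 r (?C (insert a R0 - set ds) (insert b R1 - set es)) (zip_blocks p q)
      (?C R0' R1')"
    using Cons.IH Cons.prems xy by simp
  have "zip_blocks (x # p) (y # q) =
      [Compute [0 \<mapsto> a, 1 \<mapsto> b]] @ map (DelRed 0) ds @ map (DelRed 1) es @ zip_blocks p q"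
    by (simp add: zip_blocks_def xy)
  then show ?case
    using runs_append[OF compute runs_append[OF delete0 runs_append[OF delete1 rest]]] by simp
qed

lemma num_compute_zip_blocks: "length p = length q \<Longrightarrow> num_compute (zip_blocks p q) = length p"
  by (induction p q rule: list_induct2) (auto simp: zip_blocks_def)

lemma num_io_zip_blocks: "length p = length q \<Longrightarrow> num_io (zip_blocks p q) = 0"
  by (induction p q rule: list_induct2) (auto simp: zip_blocks_def)

definition advance_blocks :: "(nat \<Rightarrow> 'a) \<Rightarrow> nat \<Rightarrow> nat \<Rightarrow> ('a \<times> 'a list) list" where
  "advance_blocks c a n = map (\<lambda>p. (c (Suc p), [c p])) [a..<a + n]"

definition path_blocks :: "(nat \<Rightarrow> 'a) \<Rightarrow> nat \<Rightarrow> ('a \<times> 'a list) list" where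
  "path_blocks c n = (c 0, []) # advance_blocks c 0 n"

lemma length_advance_blocks [simp]: "length (advance_blocks c a n) = n"
  by (simp add: advance_blocks_def)

context
  fixes V E and c :: "nat \<Rightarrow> 'a" and S r m
  assumes inj: "inj c" and disjoint: "\<And>p. c p \<notin> S" and finite: "finite S"
    and room: "card S + 2 \<le> r"
    and path: "\<And>p. p < m \<Longrightarrow> c (Suc p) \<in> V \<and> (\<forall>u. (u, c (Suc p)) \<in> E \<longrightarrow> u = c p)"
begin

lemma block_run_advance:
  assumes "a + n \<le> m"
  shows "block_run V E r (insert (c a) S) (advance_blocks c a n) (insert (c (a + n)) S)"
proof -
  have "block_run V E r (insert (c p) S) [(c (Suc p), [c p])] (insert (c (Suc p)) S)" if "p < m" for p
  proof -
    have "card (insert (c (Suc p)) (insert (c p) S)) \<le> card S + 2"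
      using finite by (simp add: card_insert_if)
    moreover have "c (Suc p) \<noteq> c p" using inj by (simp add: inj_eq)
    ultimately show ?thesis using path[OF that] disjoint room by auto
  qed
  then have "block_run V E r (insert (c a) S) (concat (map (\<lambda>p. [(c (Suc p), [c p])]) [a..<a + n]))
      (insert (c (a + n)) S)"
    using assms by (intro block_run_concat[where R = "\<lambda>p. insert (c p) S"]) auto
  then show ?thesis by (simp add: advance_blocks_def)
qed

lemma block_run_path_blocks:
  "c 0 \<in> V \<Longrightarrow> (\<And>u. (u, c 0) \<notin> E) \<Longrightarrow> n \<le> m \<Longrightarrow>
    block_run V E r S (path_blocks c n) (insert (c n) S)"
  using block_run_advance[of 0 n] room finite disjoint
  by (auto simp: path_blocks_def card_insert_if)

end

lemma length_path_blocks [simp]: "length (path_blocks c n) = Suc n"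
  by (simp add: path_blocks_def advance_blocks_def)

section \<open>The gadget DAG\<close>

definition n_seg :: nat where "n_seg = 7"
definition seg_len :: nat where "seg_len = 24"
definition path_len :: nat where "path_len = n_seg * seg_len"
definition pin :: "nat \<Rightarrow> nat" where "pin i = (n_seg - i) * seg_len - 1"
definition gadget_work :: nat where "gadget_work = (\<Sum>i<n_seg. (n_seg - i) * seg_len + 1)"
definition chain_len :: "nat \<Rightarrow> nat" where "chain_len G = G * gadget_work"

lemmas gadget_constants = n_seg_def seg_len_def path_len_def pin_def

lemma n_seg_ge: "2 \<le> n_seg" and seg_len_pos: "0 < seg_len"
  by (simp_all add: gadget_constants)

lemma pin_less: "i < n_seg \<Longrightarrow> pin i < path_len"
  by (simp add: gadget_constants)

lemma pin_0: "pin 0 = path_len - 1"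
  by (simp add: gadget_constants)

lemma gadget_work_pos: "0 < gadget_work"
  unfolding gadget_work_def
  by (rule sum_pos) (use n_seg_ge in \<open>auto simp: set_eq_iff intro!: exI[of _ 0]\<close>)

lemma chain_len_pos: "0 < G \<Longrightarrow> 0 < chain_len G"
  using gadget_work_pos by (simp add: chain_len_def)

datatype node = Chain nat | Y nat nat | W nat nat

instance node :: countable by countable_datatype

fun is_node :: "nat \<Rightarrow> node \<Rightarrow> bool" where
  "is_node G (Chain t) \<longleftrightarrow> t < chain_len G"
| "is_node G (Y g p) \<longleftrightarrow> g < G \<and> p < path_len"
| "is_node G (W g i) \<longleftrightarrow> g < G \<and> i < n_seg"

fun is_edge :: "nat \<Rightarrow> node \<Rightarrow> node \<Rightarrow> bool" where
  "is_edge G (Chain t) b \<longleftrightarrow> b = Chain (Suc t) \<and> Suc t < chain_len G"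
| "is_edge G (Y g p) b \<longleftrightarrow> g < G \<and>
     ((Suc p < path_len \<and> b = Y g (Suc p)) \<or> (\<exists>i<n_seg. p = pin i \<and> b = W g i))"
| "is_edge G (W g i) b \<longleftrightarrow>
     (Suc i < n_seg \<and> g < G \<and> b = W g (Suc i)) \<or> (Suc i = n_seg \<and> Suc g < G \<and> b = W (Suc g) 0)"

definition graph_nodes :: "nat \<Rightarrow> node set" where
  "graph_nodes G = {a. is_node G a}"

definition graph_edges :: "nat \<Rightarrow> (node \<times> node) set" where
  "graph_edges G = {(a, b). is_edge G a b}"

lemma is_edge_Chain_iff:
  "is_edge G a (Chain t) \<longleftrightarrow> (\<exists>t'. a = Chain t' \<and> t = Suc t' \<and> t < chain_len G)"
  by (cases a) auto

lemma is_edge_Y_iff: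
  "is_edge G a (Y g p) \<longleftrightarrow> (\<exists>p'. a = Y g p' \<and> p = Suc p' \<and> p < path_len \<and> g < G)"
  by (cases a) auto

lemma Y_edge: "g < G \<Longrightarrow> p < path_len - 1 \<Longrightarrow> (Y g p, Y g (Suc p)) \<in> graph_edges G"
  by (simp add: graph_edges_def)

lemma Y_Suc_parent:
  "g < G \<Longrightarrow> p < path_len - 1 \<Longrightarrow>
    Y g (Suc p) \<in> graph_nodes G \<and> (\<forall>u. (u, Y g (Suc p)) \<in> graph_edges G \<longrightarrow> u = Y g p)"
  by (auto simp: graph_nodes_def graph_edges_def is_edge_Y_iff)

lemma is_edge_nodes: "is_edge G a b \<Longrightarrow> is_node G a \<and> is_node G b"
  using n_seg_ge pin_less by (cases a; cases b) auto

lemma acyclic_if_rank: "(\<And>a b. (a, b) \<in> E \<Longrightarrow> f a < (f b :: nat)) \<Longrightarrow> acyclic E"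
proof -
  assume rank: "\<And>a b. (a, b) \<in> E \<Longrightarrow> f a < f b"
  have "(a, b) \<in> E\<^sup>+ \<Longrightarrow> f a < f b" for a b
    by (induction rule: trancl_induct) (auto dest: rank)
  then show ?thesis unfolding acyclic_def by blast
qed

fun rank :: "node \<Rightarrow> nat" where
  "rank (Chain t) = t"
| "rank (Y g p) = g * (path_len + n_seg) + p"
| "rank (W g i) = g * (path_len + n_seg) + path_len + i"

lemma graph_nodes_eq:
  "graph_nodes G = Chain ` {..<chain_len G} \<union> (\<lambda>(g, p). Y g p) ` ({..<G} \<times> {..<path_len}) \<union>
     (\<lambda>(g, i). W g i) ` ({..<G} \<times> {..<n_seg})"
  by (auto simp: graph_nodes_def elim: is_node.elims)

lemma is_dag_graph: "is_dag (graph_nodes G) (graph_edges G)"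
proof -
  have "acyclic (graph_edges G)"
  proof (rule acyclic_if_rank[where f = rank])
    fix a b assume "(a, b) \<in> graph_edges G"
    moreover have "pin i < i + path_len" if "i < n_seg" for i using pin_less[OF that] by linarith
    ultimately show "rank a < rank b"
      by (cases a) (auto simp: graph_edges_def algebra_simps less_imp_le trans_less_add1)
  qed
  moreover have "finite (graph_nodes G)" unfolding graph_nodes_eq by simp
  ultimately show ?thesis
    using is_edge_nodes by (auto simp: is_dag_def graph_nodes_def graph_edges_def)
qed

lemma card_graph_nodes: "card (graph_nodes G) = chain_len G + G * path_len + G * n_seg"
  unfolding graph_nodes_eq
  by (subst card_Un_disjoint card_image; auto simp: inj_on_def)+

lemma graph_edges_subset: "graph_edges G \<subseteq> graph_nodes G \<times> graph_nodes G"
  using is_dag_graph by (simp add: is_dag_def)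

definition w_pred :: "nat \<Rightarrow> nat \<Rightarrow> node list" where
  "w_pred g i = (if i = 0 then (if g = 0 then [] else [W (g - 1) (n_seg - 1)]) else [W g (i - 1)])"

lemma is_edge_W_iff:
  "is_edge G u (W g i) \<longleftrightarrow> g < G \<and> i < n_seg \<and> (u = Y g (pin i) \<or> u \<in> set (w_pred g i))"
  using n_seg_ge by (cases u) (auto simp: w_pred_def)

lemma graph_sink_cases:
  assumes "is_node G a" "\<forall>b. \<not> is_edge G a b"
  shows "a = Chain (chain_len G - 1) \<or> a = W (G - 1) (n_seg - 1)"
proof (cases a)
  case (Y g p)
  then have "p = pin 0" using assms by (auto simp: pin_0)
  then have "is_edge G a (W g 0)" using assms Y n_seg_ge by auto
  then show ?thesis using assms by blast
next
  case (W g i)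
  then show ?thesis using assms by (cases "Suc i = n_seg") auto
qed (use assms in auto)

lemma terminal_graph:
  assumes "Chain (chain_len G - 1) \<in> snd C \<union> (\<Union>j<k. fst C j)"
    and "W (G - 1) (n_seg - 1) \<in> snd C \<union> (\<Union>j<k. fst C j)"
  shows "terminal_config (graph_nodes G) (graph_edges G) k C"
  using assms graph_sink_cases by (fastforce simp: terminal_config_def graph_nodes_def graph_edges_def)

lemma strategy_cost_ge_chain_len:
  assumes "0 < G" "pebbling_strategy (graph_nodes G) (graph_edges G) k r ms"
  shows "chain_len G \<le> strategy_cost g ms"
  using strategy_cost_ge_path[OF assms(2), where c = Chain and d = "chain_len G - 1"]
    chain_len_pos[OF assms(1)] by (simp add: graph_nodes_def graph_edges_def)

section \<open>Two processors\<close>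

definition chain_blocks :: "nat \<Rightarrow> (node \<times> node list) list" where
  "chain_blocks G = path_blocks Chain (chain_len G - 1)"

definition w_blocks :: "nat \<Rightarrow> nat \<Rightarrow> (node \<times> node list) list" where
  "w_blocks g i = path_blocks (Y g) (pin i) @ [(W g i, Y g (pin i) # w_pred g i)]"

definition gadget_blocks :: "nat \<Rightarrow> (node \<times> node list) list" where
  "gadget_blocks G = concat (map (\<lambda>g. concat (map (w_blocks g) [0..<n_seg])) [0..<G])"

lemma block_run_chain_blocks:
  assumes "0 < G" "2 \<le> r"
  shows "block_run (graph_nodes G) (graph_edges G) r {} (chain_blocks G) {Chain (chain_len G - 1)}"
  unfolding chain_blocks_def
  using block_run_path_blocks[where S = "{}" and m = "chain_len G - 1" and c = Chain]
    chain_len_pos[OF assms(1)] assms(2)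
  by (auto simp: inj_def graph_nodes_def graph_edges_def is_edge_Chain_iff)

lemma block_run_w_blocks:
  assumes "g < G" "i < n_seg" "3 \<le> r"
  shows "block_run (graph_nodes G) (graph_edges G) r (set (w_pred g i)) (w_blocks g i) {W g i}"
proof -
  let ?S = "set (w_pred g i)"
  have "block_run (graph_nodes G) (graph_edges G) r ?S (path_blocks (Y g) (pin i)) (insert (Y g (pin i)) ?S)"
    using block_run_path_blocks[where S = ?S and m = "pin i" and c = "Y g"] assms pin_less[OF assms(2)]
    by (auto simp: inj_def graph_nodes_def graph_edges_def is_edge_Y_iff w_pred_def)
  moreover have "block_run (graph_nodes G) (graph_edges G) r (insert (Y g (pin i)) ?S)
      [(W g i, Y g (pin i) # w_pred g i)] {W g i}"
    using assms by (auto simp: graph_nodes_def graph_edges_def is_edge_W_iff w_pred_def card_insert_if)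
  ultimately show ?thesis unfolding w_blocks_def by (rule block_run_append)
qed

lemma block_run_gadget_blocks:
  assumes "0 < G" "3 \<le> r"
  shows "block_run (graph_nodes G) (graph_edges G) r {} (gadget_blocks G) {W (G - 1) (n_seg - 1)}"
proof -
  have gadget: "block_run (graph_nodes G) (graph_edges G) r (set (w_pred g 0))
      (concat (map (w_blocks g) [0..<n_seg])) (set (w_pred (Suc g) 0))" if "g < G" for g
    using block_run_concat[where R = "\<lambda>i. set (w_pred g i)", of 0 n_seg] block_run_w_blocks[OF that]
      assms(2) n_seg_ge by (simp add: w_pred_def)
  show ?thesis
    using block_run_concat[where R = "\<lambda>g. set (w_pred g 0)", of 0 G] gadget assms(1)
    by (simp add: gadget_blocks_def w_pred_def)
qed

lemma length_gadget_blocks: "length (gadget_blocks G) = chain_len G"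
proof -
  have "length (w_blocks g i) = (n_seg - i) * seg_len + 1" if "i < n_seg" for g i
    using that by (simp add: w_blocks_def gadget_constants)
  then have "length (concat (map (w_blocks g) [0..<n_seg])) = gadget_work" for g
    by (simp add: length_concat gadget_work_def sum_set_upt_conv_sum_list_nat[symmetric]
        atLeast0LessThan)
  then show ?thesis
    by (simp add: gadget_blocks_def length_concat comp_def chain_len_def sum_list_triv)
qed

definition two_processor_strategy :: "nat \<Rightarrow> node move list" where
  "two_processor_strategy G = zip_blocks (chain_blocks G) (gadget_blocks G)"

lemma two_processor_strategy:
  assumes "0 < G" "3 \<le> r"
  shows "pebbling_strategy (graph_nodes G) (graph_edges G) 2 r (two_processor_strategy G)"
    and "strategy_cost g (two_processor_strategy G) = chain_len G"
    and "num_io (two_processor_strategy G) = 0"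
proof -
  have len: "length (chain_blocks G) = length (gadget_blocks G)"
    using chain_len_pos[OF assms(1)] by (simp add: chain_blocks_def length_gadget_blocks)
  have "runs (graph_nodes G) (graph_edges G) 2 r (pair_reds {} {}, {}) (two_processor_strategy G)
      (pair_reds {Chain (chain_len G - 1)} {W (G - 1) (n_seg - 1)}, {})"
    unfolding two_processor_strategy_def
    using runs_zip_blocks[OF len block_run_chain_blocks block_run_gadget_blocks] assms by simp
  moreover have "terminal_config (graph_nodes G) (graph_edges G) 2
      (pair_reds {Chain (chain_len G - 1)} {W (G - 1) (n_seg - 1)}, {})"
    by (rule terminal_graph) (simp_all add: UN_pair_reds)
  ultimately show "pebbling_strategy (graph_nodes G) (graph_edges G) 2 r (two_processor_strategy G)"
    by (simp add: pebbling_strategy_if_runs init_config_def)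
  show "num_io (two_processor_strategy G) = 0"
    using num_io_zip_blocks[OF len] by (simp add: two_processor_strategy_def)
  then show "strategy_cost g (two_processor_strategy G) = chain_len G"
    using num_compute_zip_blocks[OF len] chain_len_pos[OF assms(1)]
    by (simp add: two_processor_strategy_def strategy_cost_eq chain_blocks_def)
qed

lemma two_processor_OPT_IO:
  assumes "0 < G" "3 \<le> r"
  shows "pebblable (graph_nodes G) (graph_edges G) 2 r" "OPT_IO (graph_nodes G) (graph_edges G) 2 r g = 0"
  using two_processor_strategy[OF assms] strategy_cost_ge_chain_len[OF assms(1)]
  by (auto simp: pebblable_def intro!: OPT_IO_eq_0)

section \<open>One processor: a strategy with few I/O steps\<close>

definition saved_upto :: "nat \<Rightarrow> nat \<Rightarrow> node set" where
  "saved_upto g j = (\<lambda>j'. Y g (j' * seg_len - 1)) ` {1..<j}"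

definition segment_steps :: "nat \<Rightarrow> nat \<Rightarrow> node seq_step list" where
  "segment_steps g j = SSave (Y g (j * seg_len - 1)) #
     concat (map block_steps (advance_blocks (Y g) (j * seg_len - 1) seg_len))"

definition walk_steps :: "nat \<Rightarrow> node seq_step list" where
  "walk_steps g = concat (map block_steps (path_blocks (Y g) (seg_len - 1))) @
     concat (map (segment_steps g) [1..<n_seg])"

lemma seg_end_Suc: "0 < j \<Longrightarrow> j * seg_len - 1 + seg_len = Suc j * seg_len - 1"
  using seg_len_pos by (simp add: Suc_le_eq)

lemma seq_run_segment_steps:
  assumes "g < G" "finite S" "card S + 2 \<le> r" "\<And>p. Y g p \<notin> S" "1 \<le> j" "j < n_seg"
  shows "seq_run (graph_nodes G) (graph_edges G) r (insert (Y g (j * seg_len - 1)) S)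
    (B \<union> saved_upto g j) (segment_steps g j)
    (insert (Y g (Suc j * seg_len - 1)) S) (B \<union> saved_upto g (Suc j))"
proof -
  have "Suc j * seg_len \<le> n_seg * seg_len" using assms(6) by (intro mult_le_mono1) simp
  then have bound: "Suc j * seg_len - 1 \<le> path_len - 1" by (simp only: path_len_def diff_le_mono)
  have end_eq: "j * seg_len - 1 + seg_len = Suc j * seg_len - 1" using seg_end_Suc assms(5) by simp
  have "block_run (graph_nodes G) (graph_edges G) r (insert (Y g (j * seg_len - 1)) S)
      (advance_blocks (Y g) (j * seg_len - 1) seg_len) (insert (Y g (j * seg_len - 1 + seg_len)) S)"
    by (rule block_run_advance[where c = "Y g" and m = "path_len - 1", OF _ assms(4,2,3)
          Y_Suc_parent[OF assms(1)]])
      (use bound end_eq in \<open>simp_all add: inj_def\<close>)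
  then have "block_run (graph_nodes G) (graph_edges G) r (insert (Y g (j * seg_len - 1)) S)
      (advance_blocks (Y g) (j * seg_len - 1) seg_len) (insert (Y g (Suc j * seg_len - 1)) S)"
    by (simp only: end_eq)
  moreover have "insert (Y g (j * seg_len - 1)) (B \<union> saved_upto g j) = B \<union> saved_upto g (Suc j)"
    using assms(5) by (auto simp: saved_upto_def atLeastLessThanSuc)
  ultimately show ?thesis
    using assms(5) seq_run_blocks by (auto simp: segment_steps_def saved_upto_def)
qed

lemma seq_run_walk_steps:
  assumes "g < G" "finite S" "card S + 2 \<le> r" "\<And>p. Y g p \<notin> S"
  shows "seq_run (graph_nodes G) (graph_edges G) r S B (walk_steps g)
    (insert (Y g (path_len - 1)) S) (B \<union> saved_upto g n_seg)"
proof -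
  have "block_run (graph_nodes G) (graph_edges G) r S (path_blocks (Y g) (seg_len - 1))
      (insert (Y g (seg_len - 1)) S)"
  proof (rule block_run_path_blocks[where c = "Y g" and m = "path_len - 1", OF _ assms(4,2,3)
        Y_Suc_parent[OF assms(1)]])
    show "Y g 0 \<in> graph_nodes G" using assms(1) pin_less[of 0] n_seg_ge by (simp add: graph_nodes_def)
    show "seg_len - 1 \<le> path_len - 1" using n_seg_ge by (simp add: path_len_def diff_le_mono)
  qed (auto simp: inj_def graph_edges_def is_edge_Y_iff)
  then have first: "seq_run (graph_nodes G) (graph_edges G) r S B
      (concat (map block_steps (path_blocks (Y g) (seg_len - 1)))) (insert (Y g (seg_len - 1)) S) B"
    by (rule seq_run_blocks)
  have "seq_run (graph_nodes G) (graph_edges G) r (insert (Y g (1 * seg_len - 1)) S) (B \<union> saved_upto g 1)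
      (concat (map (segment_steps g) [1..<n_seg]))
      (insert (Y g (n_seg * seg_len - 1)) S) (B \<union> saved_upto g n_seg)"
    using seq_run_concat[where R = "\<lambda>j. insert (Y g (j * seg_len - 1)) S"
        and B = "\<lambda>j. B \<union> saved_upto g j", of 1 n_seg] seq_run_segment_steps[OF assms] n_seg_ge
    by simp
  then show ?thesis
    using seq_run_append[OF first] by (simp add: walk_steps_def saved_upto_def path_len_def)
qed

definition w_load_steps :: "nat \<Rightarrow> nat \<Rightarrow> node seq_step list" where
  "w_load_steps g i = [SLoad (Y g (pin i)), SCompute (W g i), SDrop (Y g (pin i)), SDrop (W g (i - 1))]"

definition w_phase_steps :: "nat \<Rightarrow> node seq_step list" where
  "w_phase_steps g = [SCompute (W g 0), SDrop (Y g (path_len - 1))] @ map SDrop (w_pred g 0) @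
     concat (map (w_load_steps g) [1..<n_seg])"

lemma pin_saved: "1 \<le> i \<Longrightarrow> i < n_seg \<Longrightarrow> Y g (pin i) \<in> saved_upto g n_seg"
  unfolding saved_upto_def pin_def by (rule image_eqI[of _ _ "n_seg - i"]) auto

lemma seq_run_w_phase_steps:
  assumes "g < G" "4 \<le> r" "saved_upto g n_seg \<subseteq> B"
  shows "seq_run (graph_nodes G) (graph_edges G) r
    (insert (Y g (path_len - 1)) (insert (Chain t) (set (w_pred g 0)))) B (w_phase_steps g)
    {Chain t, W g (n_seg - 1)} B"
proof -
  let ?R = "insert (Y g (path_len - 1)) (insert (Chain t) (set (w_pred g 0)))"
  have "seq_run (graph_nodes G) (graph_edges G) r ?R B [SCompute (W g 0), SDrop (Y g (path_len - 1))]
      (insert (W g 0) (insert (Chain t) (set (w_pred g 0)))) B"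
    using assms n_seg_ge
    by (auto simp: graph_nodes_def graph_edges_def is_edge_W_iff pin_0 w_pred_def card_insert_if)
  moreover have "seq_run (graph_nodes G) (graph_edges G) r (insert (W g 0) (insert (Chain t) (set (w_pred g 0))))
      B (map SDrop (w_pred g 0)) {Chain t, W g 0} B"
    using seq_run_drops[of "w_pred g 0" "insert (W g 0) (insert (Chain t) (set (w_pred g 0)))"]
    by (auto simp: w_pred_def insert_commute)
  moreover have "seq_run (graph_nodes G) (graph_edges G) r {Chain t, W g (i - 1)} B (w_load_steps g i)
      {Chain t, W g i} B" if "1 \<le> i" "i < n_seg" for i
    using assms that pin_saved[OF that, of g]
    by (auto simp: w_load_steps_def graph_nodes_def graph_edges_def is_edge_W_iff w_pred_def card_insert_if)
  then have "seq_run (graph_nodes G) (graph_edges G) r {Chain t, W g 0} B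
      (concat (map (w_load_steps g) [1..<n_seg])) {Chain t, W g (n_seg - 1)} B"
    using seq_run_concat[where R = "\<lambda>i. {Chain t, W g (i - 1)}" and B = "\<lambda>_. B", of 1 n_seg] n_seg_ge
    by simp
  ultimately show ?thesis
    unfolding w_phase_steps_def by (blast intro: seq_run_append)
qed

definition gadget_steps :: "nat \<Rightarrow> node seq_step list" where
  "gadget_steps g = walk_steps g @ w_phase_steps g"

lemma seq_run_gadget_steps:
  assumes "g < G" "4 \<le> r"
  shows "seq_run (graph_nodes G) (graph_edges G) r (insert (Chain t) (set (w_pred g 0))) B (gadget_steps g)
    (insert (Chain t) (set (w_pred (Suc g) 0))) (B \<union> saved_upto g n_seg)"
proof -
  have "seq_run (graph_nodes G) (graph_edges G) r (insert (Chain t) (set (w_pred g 0))) B (walk_steps g)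
      (insert (Y g (path_len - 1)) (insert (Chain t) (set (w_pred g 0)))) (B \<union> saved_upto g n_seg)"
    using assms by (intro seq_run_walk_steps) (auto simp: w_pred_def card_insert_if)
  moreover have "seq_run (graph_nodes G) (graph_edges G) r
      (insert (Y g (path_len - 1)) (insert (Chain t) (set (w_pred g 0)))) (B \<union> saved_upto g n_seg)
      (w_phase_steps g) (insert (Chain t) (set (w_pred (Suc g) 0))) (B \<union> saved_upto g n_seg)"
    using seq_run_w_phase_steps[OF assms] by (simp add: w_pred_def)
  ultimately show ?thesis unfolding gadget_steps_def by (rule seq_run_append)
qed

definition one_processor_steps :: "nat \<Rightarrow> node seq_step list" where
  "one_processor_steps G = concat (map block_steps (chain_blocks G)) @ concat (map gadget_steps [0..<G])"

lemma seq_run_one_processor_steps: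
  assumes "0 < G" "4 \<le> r"
  shows "seq_run (graph_nodes G) (graph_edges G) r {} {} (one_processor_steps G)
    {Chain (chain_len G - 1), W (G - 1) (n_seg - 1)} (\<Union>g<G. saved_upto g n_seg)"
proof -
  let ?c = "Chain (chain_len G - 1)" and ?B = "\<lambda>g. \<Union>g'<g. saved_upto g' n_seg"
  have gadget: "seq_run (graph_nodes G) (graph_edges G) r (insert ?c (set (w_pred g 0))) (?B g)
      (gadget_steps g) (insert ?c (set (w_pred (Suc g) 0))) (?B (Suc g))" if "g < G" for g
  proof -
    have "?B (Suc g) = ?B g \<union> saved_upto g n_seg" by (auto simp: less_Suc_eq)
    then show ?thesis using seq_run_gadget_steps[OF that assms(2)] by simp
  qed
  have gadgets: "seq_run (graph_nodes G) (graph_edges G) r (insert ?c (set (w_pred 0 0))) (?B 0)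
      (concat (map gadget_steps [0..<G])) (insert ?c (set (w_pred G 0))) (?B G)"
    by (rule seq_run_concat[where R = "\<lambda>g. insert ?c (set (w_pred g 0))" and B = ?B]) (use gadget in auto)
  have chain: "seq_run (graph_nodes G) (graph_edges G) r {} {} (concat (map block_steps (chain_blocks G)))
      {?c} {}"
    using seq_run_blocks[OF block_run_chain_blocks[OF assms(1)]] assms(2) by simp
  have "insert ?c (set (w_pred G 0)) = {?c, W (G - 1) (n_seg - 1)}" using assms by (simp add: w_pred_def)
  then show ?thesis
    using seq_run_append[OF chain] gadgets by (simp add: one_processor_steps_def w_pred_def)
qed

lemma gadget_steps_counts:
  "num_compute (map seq_move (gadget_steps g)) = path_len + n_seg"
  "num_io (map seq_move (gadget_steps g)) = 2 * (n_seg - 1)"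
proof -
  have segment: "num_compute (map seq_move (segment_steps g j)) = seg_len"
    "num_io (map seq_move (segment_steps g j)) = 1" for j
    by (simp_all add: segment_steps_def seq_counts_simps)
  have load: "num_compute (map seq_move (w_load_steps g i)) = 1"
    "num_io (map seq_move (w_load_steps g i)) = 1" for i
    by (simp_all add: w_load_steps_def)
  have "seg_len + (n_seg - 1) * seg_len = path_len"
    using n_seg_ge by (simp add: path_len_def algebra_simps diff_mult_distrib)
  then show "num_compute (map seq_move (gadget_steps g)) = path_len + n_seg"
    using seg_len_pos n_seg_ge
    by (simp add: gadget_steps_def walk_steps_def w_phase_steps_def seq_counts_simps segment load
        path_blocks_def)
  show "num_io (map seq_move (gadget_steps g)) = 2 * (n_seg - 1)"
    by (simp add: gadget_steps_def walk_steps_def w_phase_steps_def seq_counts_simps segment load)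
qed

definition one_processor_strategy :: "nat \<Rightarrow> node move list" where
  "one_processor_strategy G = map seq_move (one_processor_steps G)"

lemma one_processor_strategy:
  assumes "0 < G" "4 \<le> r"
  shows "pebbling_strategy (graph_nodes G) (graph_edges G) 1 r (one_processor_strategy G)"
    and "num_compute (one_processor_strategy G) = card (graph_nodes G)"
    and "num_io (one_processor_strategy G) = G * (2 * (n_seg - 1))"
proof -
  have "runs (graph_nodes G) (graph_edges G) 1 r (single_reds {}, {}) (one_processor_strategy G)
      (single_reds {Chain (chain_len G - 1), W (G - 1) (n_seg - 1)}, \<Union>g<G. saved_upto g n_seg)"
    unfolding one_processor_strategy_def
    using runs_seq_run[OF seq_run_one_processor_steps[OF assms]] by simp
  moreover have "terminal_config (graph_nodes G) (graph_edges G) 1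
      (single_reds {Chain (chain_len G - 1), W (G - 1) (n_seg - 1)}, \<Union>g<G. saved_upto g n_seg)"
    by (rule terminal_graph) auto
  ultimately show "pebbling_strategy (graph_nodes G) (graph_edges G) 1 r (one_processor_strategy G)"
    by (simp add: pebbling_strategy_if_runs init_config_def)
  show "num_compute (one_processor_strategy G) = card (graph_nodes G)"
    using chain_len_pos[OF assms(1)]
    by (simp add: one_processor_strategy_def one_processor_steps_def seq_counts_simps
        gadget_steps_counts card_graph_nodes chain_blocks_def algebra_simps)
  show "num_io (one_processor_strategy G) = G * (2 * (n_seg - 1))"
    by (simp add: one_processor_strategy_def one_processor_steps_def seq_counts_simps
        gadget_steps_counts)
qed

section \<open>One processor: every optimal strategy needs many I/O steps\<close>

lemma disjoint_family_misses:
  assumes "finite R" "finite J" "card R < card J"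
    and disjoint: "\<And>i j. i \<in> J \<Longrightarrow> j \<in> J \<Longrightarrow> i \<noteq> j \<Longrightarrow> S i \<inter> S j = {}"
  shows "\<exists>j\<in>J. R \<inter> S j = {}"
proof (rule ccontr)
  assume "\<not> ?thesis"
  then have "\<forall>j\<in>J. \<exists>x. x \<in> R \<inter> S j" by blast
  then obtain f where f: "\<And>j. j \<in> J \<Longrightarrow> f j \<in> R \<inter> S j" by metis
  have "inj_on f J"
  proof (rule inj_onI, rule ccontr)
    fix i j assume "i \<in> J" "j \<in> J" "f i = f j" "i \<noteq> j"
    then show False using f[of i] f[of j] disjoint[of i j] by auto
  qed
  then have "card J \<le> card R" using f assms(1) by (intro card_inj_on_le) auto
  then show False using assms(3) by simp
qed

lemma card_plus_card_le_sum:
  fixes c :: "'a \<Rightarrow> nat"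
  assumes "finite V" "X \<subseteq> V" "\<And>v. v \<in> V \<Longrightarrow> 1 \<le> c v" "\<And>v. v \<in> X \<Longrightarrow> 2 \<le> c v"
  shows "card V + card X \<le> sum c V"
proof -
  have "card V + card X = (\<Sum>v\<in>V. 1) + (\<Sum>v\<in>V. if v \<in> X then 1 else 0)"
    using assms(1,2) by (simp add: sum.If_cases Int_absorb1)
  also have "\<dots> = (\<Sum>v\<in>V. 1 + (if v \<in> X then 1 else 0))" by (rule sum.distrib[symmetric])
  also have "\<dots> \<le> sum c V" by (intro sum_mono) (auto simp: numeral_2_eq_2 dest: assms(3,4))
  finally show ?thesis .
qed

definition segment :: "nat \<Rightarrow> nat set" where
  "segment j = {(j - 1) * seg_len..<j * seg_len}"

lemma segment_div: "p \<in> segment j \<Longrightarrow> 0 < j \<and> p div seg_len = j - 1"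
  by (cases j) (auto simp: segment_def mult.commute intro!: div_nat_eqI)

lemma segment_disjoint:
  assumes "i \<noteq> j"
  shows "segment i \<inter> segment j = {}"
proof (rule ccontr)
  assume "segment i \<inter> segment j \<noteq> {}"
  then obtain p where "p \<in> segment i" "p \<in> segment j" by blast
  then show False using segment_div[of p i] segment_div[of p j] assms by auto
qed

lemma segment_below_path_end: "j < n_seg \<Longrightarrow> p \<in> segment j \<Longrightarrow> p < path_len - 1"
proof -
  assume "j < n_seg" "p \<in> segment j"
  then have "p < j * seg_len" "j * seg_len \<le> (n_seg - 1) * seg_len"
    by (auto simp: segment_def intro: mult_le_mono1)
  then show "p < path_len - 1" using n_seg_ge seg_len_pos by (simp add: path_len_def diff_mult_distrib)
qed

lemma card_segment: "0 < j \<Longrightarrow> card (segment j) = seg_len"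
  by (simp add: segment_def diff_mult_distrib)

lemma pin_in_segment:
  "1 \<le> j \<Longrightarrow> j < n_seg \<Longrightarrow> pin (n_seg - j) = j * seg_len - 1 \<and> pin (n_seg - j) \<in> segment j"
  using seg_len_pos by (auto simp: pin_def segment_def diff_mult_distrib)

lemma mem_segment: "0 < j \<Longrightarrow> p \<in> segment j \<longleftrightarrow> (j - 1) * seg_len \<le> p \<and> p \<le> j * seg_len - 1"
proof -
  assume "0 < j"
  then have "0 < j * seg_len" using seg_len_pos by simp
  then show ?thesis unfolding segment_def atLeastLessThan_iff by arith
qed

lemma card_loaded_gadgets_le: "card {g. g < G \<and> (\<exists>u p. loads ms u 0 (Y g p))} \<le> num_io ms"
proof -
  let ?loaded = "{g. g < G \<and> (\<exists>u p. loads ms u 0 (Y g p))}"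
  define f where "f g = (SOME u. \<exists>p. loads ms u 0 (Y g p))" for g
  have f: "\<exists>p. loads ms (f g) 0 (Y g p)" if "g \<in> ?loaded" for g
    unfolding f_def by (rule someI_ex) (use that in auto)
  have "inj_on f ?loaded"
  proof (rule inj_onI)
    fix g g' assume "g \<in> ?loaded" "g' \<in> ?loaded" "f g = f g'"
    then show "g = g'" using f[of g] f[of g'] by (auto simp: loads_def)
  qed
  moreover have "f ` ?loaded \<subseteq> {u. \<exists>v. loads ms u 0 v}" using f by blast
  moreover have "finite {u. \<exists>v. loads ms u 0 v}"
    by (rule finite_subset[of _ "{..<length ms}"]) (auto simp: loads_def)
  ultimately have "card ?loaded \<le> card {u. \<exists>v. loads ms u 0 v}" by (intro card_inj_on_le)
  then show ?thesis using card_load_times_le[of ms 0] by simp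
qed

lemma card_unloaded_gadgets_ge:
  "G - num_io ms \<le> card {g. g < G \<and> \<not> (\<exists>u p. loads ms u 0 (Y g p))}"
proof -
  let ?free = "{g. g < G \<and> \<not> (\<exists>u p. loads ms u 0 (Y g p))}"
    and ?loaded = "{g. g < G \<and> (\<exists>u p. loads ms u 0 (Y g p))}"
  have "G = card {..<G}" by simp
  also have "\<dots> \<le> card (?free \<union> ?loaded)"
    by (rule card_mono) (auto intro: finite_subset[of _ "{..<G}"])
  also have "\<dots> \<le> card ?free + card ?loaded" by (rule card_Un_le)
  finally show ?thesis using card_loaded_gadgets_le[of G ms] by linarith
qed

context
  fixes G r ms
  assumes strategy: "pebbling_strategy (graph_nodes G) (graph_edges G) 1 r ms"
begin

lemma node_computed: "is_node G a \<Longrightarrow> \<exists>u. computes ms u 0 a"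
  using dag_node_computed[OF strategy is_dag_graph, of a] computes_processor[OF strategy]
  by (fastforce simp: graph_nodes_def)

lemma first_W_computation:
  assumes "g < G"
  obtains T0 where "computes ms T0 0 (W g 0)"
    and "\<And>u i. i < n_seg \<Longrightarrow> computes ms u 0 (W g i) \<Longrightarrow> T0 \<le> u"
proof -
  define T0 where "T0 = (LEAST u. computes ms u 0 (W g 0))"
  have first: "computes ms T0 0 (W g 0)"
    unfolding T0_def by (rule LeastI_ex) (use node_computed[of "W g 0"] assms n_seg_ge in auto)
  have "T0 \<le> u" if i: "i < n_seg" and comp: "computes ms u 0 (W g i)" for u i
  proof -
    have "\<And>i. i < n_seg - 1 \<Longrightarrow> (W g i, W g (Suc i)) \<in> graph_edges G"
      using assms by (auto simp: graph_edges_def)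
    then have "\<exists>u'\<le>u. \<exists>j'. computes ms u' j' (W g 0)"
      using path_computed_after_source[OF strategy, of "n_seg - 1" "W g" i u 0] i comp by simp
    then obtain u' j' where "u' \<le> u" "computes ms u' j' (W g 0)" by blast
    moreover have "j' = 0" using computes_processor[OF strategy \<open>computes ms u' j' (W g 0)\<close>] by simp
    ultimately show ?thesis unfolding T0_def by (meson Least_le le_trans)
  qed
  with first show thesis by (rule that)
qed

lemma Y_path_computed_before:
  assumes g: "g < G" and no_load: "\<And>u p. \<not> loads ms u 0 (Y g p)"
    and T0: "computes ms T0 0 (W g 0)"
  obtains T where "T < T0" "computes ms T 0 (Y g (path_len - 1))"
    and "\<And>p. p < path_len - 1 \<Longrightarrow> \<exists>u<T. computes ms u 0 (Y g p)"
proof -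
  have len: "2 \<le> path_len" by (simp add: path_len_def n_seg_def seg_len_def)
  have "Y g (path_len - 1) \<in> fst (run_config ms T0) 0"
    using computes_parent_red[OF strategy T0, of "Y g (path_len - 1)"] g n_seg_ge
    by (simp add: graph_edges_def is_edge_W_iff pin_0)
  then obtain T where T: "T < T0" "computes ms T 0 (Y g (path_len - 1))"
    using red_origin[of 0 T0 ms "Y g (path_len - 1)" 0] no_load T0
    by (auto simp: computes_def init_config_def)
  have red: "Y g (path_len - 2) \<in> fst (run_config ms T) 0"
    using computes_parent_red[OF strategy T(2), of "Y g (path_len - 2)"] g len
    by (simp add: graph_edges_def Suc_diff_Suc numeral_2_eq_2)
  have T_len: "T \<le> length ms" using T(2) by (simp add: computes_def)
  have "\<exists>u<T. computes ms u 0 (Y g p)" if "p < path_len - 1" for p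
  proof -
    have "\<exists>u\<ge>0. u < T \<and> computes ms u 0 (Y g p)"
      by (rule path_recomputed[where y = "Y g" and M = "path_len - 1" and j = 0,
            OF strategy Y_edge[OF g] no_load]) (use that red T_len in \<open>auto simp: init_config_def\<close>)
    then show ?thesis by auto
  qed
  with T show thesis by (rule that)
qed

context
  assumes few_reds: "r \<le> n_seg - 1"
begin

lemma segment_unpebbled:
  assumes "T < length ms" "Y g (path_len - 1) \<in> fst (run_config ms (Suc T)) 0"
  shows "\<exists>j\<in>{1..<n_seg}. \<forall>p\<in>segment j. Y g p \<notin> fst (run_config ms (Suc T)) 0"
proof -
  let ?R = "fst (run_config ms (Suc T)) 0 - {Y g (path_len - 1)}"
  have card: "card ?R < card {1..<n_seg}"
    using red_valid[OF strategy assms(1), of 0] finite_red[of ms "Suc T" 0] assms(2) few_reds n_seg_ge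
    by simp
  have disjoint: "Y g ` segment i \<inter> Y g ` segment j = {}" if "i \<noteq> j" for i j
    using segment_disjoint[OF that] by auto
  obtain j where j: "j \<in> {1..<n_seg}" "?R \<inter> Y g ` segment j = {}"
    using disjoint_family_misses[of ?R "{1..<n_seg}" "\<lambda>j. Y g ` segment j", OF _ _ card disjoint]
      finite_red[of ms "Suc T" 0] by auto
  moreover have "Y g p \<noteq> Y g (path_len - 1)" if "p \<in> segment j" for p
    using segment_below_path_end[OF _ that] j(1) by auto
  ultimately show ?thesis by blast
qed

lemma gadget_segment_recomputed:
  assumes g: "g < G" and no_load: "\<And>u p. \<not> loads ms u 0 (Y g p)"
  shows "\<exists>j\<in>{1..<n_seg}. \<forall>p\<in>segment j. 2 \<le> card {u. computes ms u 0 (Y g p)}"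
proof -
  obtain T0 where T0: "computes ms T0 0 (W g 0)"
    and after: "\<And>u i. i < n_seg \<Longrightarrow> computes ms u 0 (W g i) \<Longrightarrow> T0 \<le> u"
    using first_W_computation[OF g] by blast
  obtain T where T: "T < T0" "computes ms T 0 (Y g (path_len - 1))"
    and before: "\<And>p. p < path_len - 1 \<Longrightarrow> \<exists>u<T. computes ms u 0 (Y g p)"
    using Y_path_computed_before[OF g no_load T0] by blast
  have T_len: "T < length ms" using T(2) by (simp add: computes_def)
  obtain j where j: "1 \<le> j" "j < n_seg"
    and unpebbled: "\<forall>p\<in>segment j. Y g p \<notin> fst (run_config ms (Suc T)) 0"
    using segment_unpebbled[OF T_len computes_red[OF T(2)]] by auto
  obtain ui where ui: "computes ms ui 0 (W g (n_seg - j))"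
    using node_computed[of "W g (n_seg - j)"] g j by auto
  have later: "Suc T \<le> ui" using after[OF _ ui] j T(1) by simp
  have ui_len: "ui \<le> length ms" using ui by (simp add: computes_def)
  have pin: "pin (n_seg - j) = j * seg_len - 1" "j * seg_len - 1 \<in> segment j"
    using pin_in_segment[OF j] by auto
  have red: "Y g (j * seg_len - 1) \<in> fst (run_config ms ui) 0"
    using computes_parent_red[OF strategy ui, of "Y g (pin (n_seg - j))"] g j pin
    by (simp add: graph_edges_def is_edge_W_iff)
  have again: "\<exists>u\<ge>Suc T. u < ui \<and> computes ms u 0 (Y g p)" if p: "p \<in> segment j" for p
  proof (rule path_recomputed[where y = "Y g" and M = "path_len - 1" and j = 0,
        OF strategy Y_edge[OF g] no_load])
    show "j * seg_len - 1 \<le> path_len - 1" using segment_below_path_end[OF j(2) pin(2)] by simp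
    show "\<forall>p'. (j - 1) * seg_len \<le> p' \<and> p' \<le> j * seg_len - 1 \<longrightarrow> Y g p' \<notin> fst (run_config ms (Suc T)) 0"
      using unpebbled mem_segment[of j] j(1) by auto
    show "(j - 1) * seg_len \<le> p" "p \<le> j * seg_len - 1" using p mem_segment[of j] j(1) by auto
  qed (use later ui_len red in auto)
  show ?thesis
  proof (intro bexI ballI)
    fix p assume p: "p \<in> segment j"
    obtain u1 where "u1 < T" "computes ms u1 0 (Y g p)"
      using before segment_below_path_end[OF j(2) p] by blast
    with again[OF p] show "2 \<le> card {u. computes ms u 0 (Y g p)}"
      using card_computes_ge_2 by fastforce
  qed (use j in auto)
qed

lemma num_compute_lower_bound: "card (graph_nodes G) + seg_len * (G - num_io ms) \<le> num_compute ms"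
proof -
  define free where "free = {g. g < G \<and> \<not> (\<exists>u p. loads ms u 0 (Y g p))}"
  have free_card: "G - num_io ms \<le> card free" unfolding free_def by (rule card_unloaded_gadgets_ge)
  have "\<forall>g\<in>free. \<exists>j. j \<in> {1..<n_seg} \<and> (\<forall>p\<in>segment j. 2 \<le> card {u. computes ms u 0 (Y g p)})"
    using gadget_segment_recomputed unfolding free_def by blast
  then obtain seg where seg: "\<forall>g\<in>free.
      seg g \<in> {1..<n_seg} \<and> (\<forall>p\<in>segment (seg g). 2 \<le> card {u. computes ms u 0 (Y g p)})"
    by (auto dest!: bchoice)
  define X where "X = (\<Union>g\<in>free. Y g ` segment (seg g))"
  have "card X = (\<Sum>g\<in>free. card (Y g ` segment (seg g)))"
    unfolding X_def by (rule card_UN_disjoint) (auto simp: free_def segment_def)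
  also have "\<dots> = (\<Sum>g\<in>free. seg_len)"
    using seg by (intro sum.cong) (auto simp: card_image inj_on_def card_segment)
  also have "\<dots> = card free * seg_len" by simp
  finally have "seg_len * (G - num_io ms) \<le> card X" using free_card by (simp add: mult.commute)
  moreover have "card (graph_nodes G) + card X \<le> (\<Sum>v\<in>graph_nodes G. card {u. computes ms u 0 v})"
  proof (rule card_plus_card_le_sum)
    show "finite (graph_nodes G)" using is_dag_graph by (simp add: is_dag_def)
    show "X \<subseteq> graph_nodes G"
      using seg segment_below_path_end by (fastforce simp: X_def free_def graph_nodes_def)
    show "1 \<le> card {u. computes ms u 0 v}" if v: "v \<in> graph_nodes G" for v
    proof -
      obtain u where "computes ms u 0 v" using node_computed[of v] v
        by (auto simp: graph_nodes_def)
      then show ?thesis using finite_computes[of ms 0 v] by (auto simp: Suc_le_eq card_gt_0_iff)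
    qed
    show "2 \<le> card {u. computes ms u 0 v}" if "v \<in> X" for v
      using that seg by (auto simp: X_def)
  qed
  moreover have "(\<Sum>v\<in>graph_nodes G. card {u. computes ms u 0 v}) \<le> num_compute ms"
    using is_dag_graph by (intro sum_card_computes_le) (simp add: is_dag_def)
  ultimately show ?thesis by linarith
qed

end

end

lemma one_processor_OPT_IO:
  assumes "0 < G"
  shows "pebblable (graph_nodes G) (graph_edges G) 1 6"
    and "G \<le> 2 * OPT_IO (graph_nodes G) (graph_edges G) 1 6 1"
    and "OPT_IO (graph_nodes G) (graph_edges G) 1 6 1 \<le> card (graph_nodes G) + 12 * G"
proof -
  have "4 \<le> (6::nat)" by simp
  note upper = one_processor_strategy[OF assms this]
  obtain ms where ms: "pebbling_strategy (graph_nodes G) (graph_edges G) 1 6 ms"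
    "strategy_cost 1 ms = OPT (graph_nodes G) (graph_edges G) 1 6 1"
    "num_io ms = OPT_IO (graph_nodes G) (graph_edges G) 1 6 1"
    using OPT_IO_attained[OF upper(1)] by blast
  have "num_compute ms + num_io ms \<le> card (graph_nodes G) + 12 * G"
    using OPT_le[OF upper(1), of 1] ms(2) upper(2,3) by (simp add: strategy_cost_eq n_seg_def)
  moreover have "card (graph_nodes G) + 24 * (G - num_io ms) \<le> num_compute ms"
    using num_compute_lower_bound[OF ms(1)] by (simp add: n_seg_def seg_len_def)
  ultimately show "G \<le> 2 * OPT_IO (graph_nodes G) (graph_edges G) 1 6 1"
    "OPT_IO (graph_nodes G) (graph_edges G) 1 6 1 \<le> card (graph_nodes G) + 12 * G"
    using ms(3) by linarith+
  show "pebblable (graph_nodes G) (graph_edges G) 1 6" using upper(1) by (auto simp: pebblable_def)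
qed

definition nat_nodes :: "nat \<Rightarrow> nat set" where
  "nat_nodes G = to_nat ` graph_nodes G"

definition nat_edges :: "nat \<Rightarrow> (nat \<times> nat) set" where
  "nat_edges G = map_prod to_nat to_nat ` graph_edges G"

lemma nat_graph:
  "is_dag (nat_nodes G) (nat_edges G)"
  "card (nat_nodes G) = card (graph_nodes G)"
  "OPT_IO (nat_nodes G) (nat_edges G) k r g = OPT_IO (graph_nodes G) (graph_edges G) k r g"
  "pebblable (nat_nodes G) (nat_edges G) k r \<longleftrightarrow> pebblable (graph_nodes G) (graph_edges G) k r"
proof -
  have inj: "inj_on to_nat (graph_nodes G)" by (meson inj_on_subset inj_to_nat subset_UNIV)
  show "is_dag (nat_nodes G) (nat_edges G)"
    "card (nat_nodes G) = card (graph_nodes G)"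
    "OPT_IO (nat_nodes G) (nat_edges G) k r g = OPT_IO (graph_nodes G) (graph_edges G) k r g"
    "pebblable (nat_nodes G) (nat_edges G) k r \<longleftrightarrow> pebblable (graph_nodes G) (graph_edges G) k r"
    using is_dag_image[OF is_dag_graph inj] card_image[OF inj] OPT_IO_image[OF inj graph_edges_subset]
      pebblable_image[OF inj graph_edges_subset]
    by (simp_all add: nat_nodes_def nat_edges_def)
qed

definition nodes_per_gadget :: nat where
  "nodes_per_gadget = gadget_work + path_len + n_seg"

lemma card_nat_nodes: "card (nat_nodes G) = G * nodes_per_gadget"
  by (simp add: nat_graph card_graph_nodes chain_len_def nodes_per_gadget_def algebra_simps)

lemma card_nat_nodes_ge: "G \<le> card (nat_nodes G)"
  using mult_le_mono2[of 1 nodes_per_gadget G]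
  by (simp add: card_nat_nodes nodes_per_gadget_def path_len_def gadget_constants)

lemma one_processor_OPT_IO_linear:
  assumes "0 < G"
  shows "card (nat_nodes G) \<le> 2 * nodes_per_gadget * OPT_IO (nat_nodes G) (nat_edges G) 1 6 1"
    and "OPT_IO (nat_nodes G) (nat_edges G) 1 6 1 \<le> 13 * card (nat_nodes G)"
proof -
  have "G * nodes_per_gadget \<le> 2 * OPT_IO (graph_nodes G) (graph_edges G) 1 6 1 * nodes_per_gadget"
    using one_processor_OPT_IO(2)[OF assms] by (rule mult_le_mono1)
  then show "card (nat_nodes G) \<le> 2 * nodes_per_gadget * OPT_IO (nat_nodes G) (nat_edges G) 1 6 1"
    by (simp add: card_nat_nodes nat_graph algebra_simps)
  show "OPT_IO (nat_nodes G) (nat_edges G) 1 6 1 \<le> 13 * card (nat_nodes G)"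
    using one_processor_OPT_IO(3)[OF assms] card_nat_nodes_ge[of G] by (simp add: nat_graph)
qed

lemma bigtheta_of_linear_bounds:
  fixes f h :: "nat \<Rightarrow> nat"
  assumes "0 < a" "0 < b" "\<And>m. h m \<le> a * f m" "\<And>m. f m \<le> b * h m"
  shows "(\<lambda>m. real (f m)) \<in> \<Theta>(\<lambda>m. real (h m))"
proof (rule bigthetaI'[of "1 / real a" "real b"])
  have "real (h m) \<le> real a * real (f m)" "real (f m) \<le> real b * real (h m)" for m
    using assms(3,4)[of m] of_nat_mono by fastforce+
  then show "\<forall>\<^sub>F m in sequentially. 1 / real a * norm (real (h m)) \<le> norm (real (f m)) \<and>
      norm (real (f m)) \<le> real b * norm (real (h m))"
    using assms(1) by (simp add: field_simps)
qed (use assms in simp_all)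

theorem mainTheorem12:
  shows "\<exists>(g::nat) (r0::nat) (V :: nat \<Rightarrow> nat set) (E :: nat \<Rightarrow> (nat \<times> nat) set).
    g > 0 \<and> r0 > 0 \<and> even r0 \<and>
    (\<forall>m. is_dag (V m) (E m)) \<and>
    filterlim (\<lambda>m. card (V m)) at_top sequentially \<and>
    (\<forall>m. pebblable (V m) (E m) 1 r0 \<and> pebblable (V m) (E m) 2 (r0 div 2)
          \<and> pebblable (V m) (E m) 2 r0) \<and>
    (\<lambda>m. real (OPT_IO (V m) (E m) 1 r0 g)) \<in> \<Theta>(\<lambda>m. real (card (V m))) \<and>
    (\<forall>m. OPT_IO (V m) (E m) 2 (r0 div 2) g = 0) \<and>
    (\<forall>m. OPT_IO (V m) (E m) 2 r0 g = 0)"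
proof -
  define V where "V m = nat_nodes (Suc m)" for m
  define E where "E m = nat_edges (Suc m)" for m
  have "m \<le> card (V m)" for m
    unfolding V_def by (rule le_trans[OF le_SucI[OF le_refl] card_nat_nodes_ge])
  then have "filterlim (\<lambda>m. card (V m)) at_top sequentially"
    by (intro filterlim_at_top_mono[OF filterlim_ident] always_eventually) simp
  moreover have "(\<lambda>m. real (OPT_IO (V m) (E m) 1 6 1)) \<in> \<Theta>(\<lambda>m. real (card (V m)))"
    using one_processor_OPT_IO_linear[of "Suc _"]
    by (intro bigtheta_of_linear_bounds[of "2 * nodes_per_gadget" 13])
      (simp_all add: V_def E_def nodes_per_gadget_def path_len_def gadget_constants)
  moreover have "pebblable (V m) (E m) 1 6" "pebblable (V m) (E m) 2 3" "pebblable (V m) (E m) 2 6"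
    "OPT_IO (V m) (E m) 2 3 1 = 0" "OPT_IO (V m) (E m) 2 6 1 = 0" "is_dag (V m) (E m)" for m
    using one_processor_OPT_IO(1)[of "Suc m"] two_processor_OPT_IO[of "Suc m" 3]
      two_processor_OPT_IO[of "Suc m" 6]
    by (simp_all add: V_def E_def nat_graph)
  ultimately show ?thesis
    by (intro exI[of _ 1] exI[of _ 6] exI[of _ V] exI[of _ E]) simp
qed

end
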